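(* Let $\mathcal{G}=\langle\mathcal{Q},\mathbf{f}\rangle$ satisfy Assumptions 1 and 2 and suppose $\boldsymbol{\Upsilon}_{\mathbf{F}}$ is a P-matrix. Then the best-response mapping $\mathcal{B}:\mathcal{Q}\to\mathcal{Q}$, $\mathcal{B}(\mathbf{x})=(\mathcal{B}_i(\mathbf{x}_{-i}))_{i=1}^I$ with $\mathcal{B}_i(\mathbf{x}_{-i})=\arg\min_{\mathbf{x}_i\in\mathcal{Q}_i}f_i(\mathbf{x}_i,\mathbf{x}_{-i})$, is well defined and is a block-contraction: there exists $\mathbf{c}>\mathbf{0}$ such that $$\|\mathcal{B}(\mathbf{x})-\mathcal{B}(\mathbf{y})\|_{\rm block}^{\mathbf{c}}\le\|\boldsymbol{\Gamma}_{\mathbf{F}}\|^{\mathbf{c}}_{\infty,\rm mat}\,\|\mathbf{x}-\mathbf{y}\|^{\mathbf{c}}_{\rm block}\quad\forall\mathbf{x},\mathbf{y}\in\mathcal{Q},$$ with $\|\boldsymbol{\Gamma}_{\mathbf{F}}\|^{\mathbf{c}}_{\infty,\rm mat}<1$.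
   Context: Real NEP setting: player $i$ chooses $\mathbf{x}_i\in\mathcal{Q}_i\subseteq\mathbb{R}^{n_i}$, minimizes $f_i(\mathbf{x}_i,\mathbf{x}_{-i})$; $\mathcal{Q}=\prod_i\mathcal{Q}_i$. Assumption 1: each $\mathcal{Q}_i$ nonempty closed convex, each $f_i$ continuously differentiable on $\mathcal{Q}$ and convex in $\mathbf{x}_i$ for fixed $\mathbf{x}_{-i}$. Assumption 2: each $f_i$ twice continuously differentiable with bounded derivatives on $\mathcal{Q}$. $\mathbf{F}_i=\nabla_{\mathbf{x}_i}f_i$. With arbitrary nonsingular $\mathbf{C}_i\in\mathbb{R}^{n_i\times n_i}$: $\alpha_i^{\min}=\inf_{\mathbf{x}\in\mathcal{Q}}\lambda_{\rm least}(\mathbf{C}_i^T\mathbf{J}_i\mathbf{F}_i(\mathbf{x})\mathbf{C}_i)$ ($\lambda_{\rm least}(\mathbf{A})$ = smallest eigenvalue of $(\mathbf{A}+\mathbf{A}^T)/2$, $\mathbf{J}_j\mathbf{F}_i$ = Jacobian of $\mathbf{F}_i$ w.r.t. $\mathbf{x}_j$), $\beta_{ij}^{\max}=\sup_{\mathbf{x}\in\mathcal{Q}}\|\mathbf{C}_i^T\mathbf{J}_j\mathbf{F}_i(\mathbf{x})\mathbf{C}_j\|_2$; $\boldsymbol{\Upsilon}_{\mathbf{F}}$ has diagonal $\alpha_i^{\min}$ and off-diagonal $-\beta_{ij}^{\max}$; $\boldsymbol{\Gamma}_{\mathbf{F}}$ has zero diagonal and $[\boldsymbol{\Gamma}_{\mathbf{F}}]_{ij}=\beta_{ij}^{\max}/\alpha_i^{\min}$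 for $i\ne j$. A P-matrix has all principal minors positive. Norms: for $\mathbf{c}=(c_i)>\mathbf{0}$, $\|\mathbf{x}\|^{\mathbf{c}}_{\rm block}=\max_i\|\mathbf{C}_i^{-1}\mathbf{x}_i\|/c_i$ (Euclidean norm inside), and for $\mathbf{A}\in\mathbb{R}^{I\times I}$, $\|\mathbf{A}\|^{\mathbf{c}}_{\infty,\rm mat}=\max_i\frac1{c_i}\sum_j|[\mathbf{A}]_{ij}|c_j$. *)

theory Defs
  imports "HOL-Analysis.Analysis"
begin

text \<open>The finite player type 'p
and the block map blk :: 'k => 'p assign each coordinate to one player; player i's
strategy space R^{n_i} is the coordinate subspace blk_space blk i (n_i = number of
coordinates k with blk k = i).\<close>

definition blk_space :: "('k::finite \<Rightarrow> 'p) \<Rightarrow> 'p \<Rightarrow> (real^'k) set" where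
  "blk_space blk i = {v. \<forall>k. blk k \<noteq> i \<longrightarrow> v $ k = 0}"

text \<open>x_i, embedded into real^'k\<close>
definition blk_proj :: "('k::finite \<Rightarrow> 'p) \<Rightarrow> 'p \<Rightarrow> real^'k \<Rightarrow> real^'k" where
  "blk_proj blk i x = (\<chi> k. if blk k = i then x $ k else 0)"

definition blk_upd :: "('k::finite \<Rightarrow> 'p) \<Rightarrow> real^'k \<Rightarrow> 'p \<Rightarrow> real^'k \<Rightarrow> real^'k" where
  "blk_upd blk x i y = (\<chi> k. if blk k = i then y $ k else x $ k)"

definition prod_set :: "('k::finite \<Rightarrow> 'p) \<Rightarrow> ('p \<Rightarrow> (real^'k) set) \<Rightarrow> (real^'k) set" where
  "prod_set blk Qs = {x. \<forall>i. blk_proj blk i x \<in> Qs i}"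

text \<open>Block-diagonal matrix: encodes the family of matrices C_i (block (i,i)).\<close>
definition block_diag :: "('k::finite \<Rightarrow> 'p) \<Rightarrow> real^'k^'k \<Rightarrow> bool" where
  "block_diag blk C \<longleftrightarrow> (\<forall>k l. blk k \<noteq> blk l \<longrightarrow> C $ k $ l = 0)"

text \<open>Eigenvalues of the (i,i) diagonal block of (A + A^T)/2, i.e. of the n_i x n_i
symmetric part of the submatrix, acting on player i's coordinate subspace.\<close>
definition block_sym_eigs :: "('k::finite \<Rightarrow> 'p) \<Rightarrow> real^'k^'k \<Rightarrow> 'p \<Rightarrow> real set" where
  "block_sym_eigs blk A i = {mu. \<exists>v. v \<in> blk_space blk i \<and> v \<noteq> 0 \<and>
      blk_proj blk i ((inverse 2 *\<^sub>R (A + transpose A)) *v v) = mu *\<^sub>R v}"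

definition block_lambda_least :: "('k::finite \<Rightarrow> 'p) \<Rightarrow> real^'k^'k \<Rightarrow> 'p \<Rightarrow> real" where
  "block_lambda_least blk A i = Min (block_sym_eigs blk A i)"

definition block_norm2 :: "('k::finite \<Rightarrow> 'p) \<Rightarrow> real^'k^'k \<Rightarrow> 'p \<Rightarrow> 'p \<Rightarrow> real" where
  "block_norm2 blk A i j = onorm (\<lambda>v. blk_proj blk i (A *v blk_proj blk j v))"

text \<open>Full matrix whose (i,j) block is J_j F_i(x): row k (of block blk k) is taken
from the Hessian of f_{blk k}.\<close>
definition jac_F :: "('k::finite \<Rightarrow> 'p) \<Rightarrow> ('p \<Rightarrow> real^'k \<Rightarrow> real^'k^'k) \<Rightarrow> real^'k \<Rightarrow> real^'k^'k" where
  "jac_F blk hess x = (\<chi> k l. hess (blk k) x $ k $ l)"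

text \<open>Block (i,j) of C^T (JF x) C is C_i^T J_j F_i(x) C_j for block diagonal C\<close>
definition scaled_jac :: "('k::finite \<Rightarrow> 'p) \<Rightarrow> real^'k^'k \<Rightarrow> ('p \<Rightarrow> real^'k \<Rightarrow> real^'k^'k) \<Rightarrow> real^'k \<Rightarrow> real^'k^'k" where
  "scaled_jac blk C hess x = transpose C ** jac_F blk hess x ** C"

definition alpha_min :: "('k::finite \<Rightarrow> 'p) \<Rightarrow> real^'k^'k \<Rightarrow> ('p \<Rightarrow> real^'k \<Rightarrow> real^'k^'k) \<Rightarrow> (real^'k) set \<Rightarrow> 'p \<Rightarrow> real" where
  "alpha_min blk C hess Q i = (INF x\<in>Q. block_lambda_least blk (scaled_jac blk C hess x) i)"

definition beta_max :: "('k::finite \<Rightarrow> 'p) \<Rightarrow> real^'k^'k \<Rightarrow> ('p \<Rightarrow> real^'k \<Rightarrow> real^'k^'k) \<Rightarrow> (real^'k) set \<Rightarrow> 'p \<Rightarrow> 'p \<Rightarrow> real" where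
  "beta_max blk C hess Q i j = (SUP x\<in>Q. block_norm2 blk (scaled_jac blk C hess x) i j)"

definition Upsilon_F :: "('k::finite \<Rightarrow> 'p::finite) \<Rightarrow> real^'k^'k \<Rightarrow> ('p \<Rightarrow> real^'k \<Rightarrow> real^'k^'k) \<Rightarrow> (real^'k) set \<Rightarrow> real^'p^'p" where
  "Upsilon_F blk C hess Q = (\<chi> i j. if i = j then alpha_min blk C hess Q i else - beta_max blk C hess Q i j)"

definition Gamma_F :: "('k::finite \<Rightarrow> 'p::finite) \<Rightarrow> real^'k^'k \<Rightarrow> ('p \<Rightarrow> real^'k \<Rightarrow> real^'k^'k) \<Rightarrow> (real^'k) set \<Rightarrow> real^'p^'p" where
  "Gamma_F blk C hess Q = (\<chi> i j. if i = j then 0 else beta_max blk C hess Q i j / alpha_min blk C hess Q i)"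

definition principal_minor :: "real^'n^'n \<Rightarrow> 'n set \<Rightarrow> real" where
  "principal_minor A S = (\<Sum>p | p permutes S. of_int (sign p) * (\<Prod>i\<in>S. A $ i $ p i))"

definition P_matrix :: "real^'n::finite^'n \<Rightarrow> bool" where
  "P_matrix A \<longleftrightarrow> (\<forall>S. S \<noteq> {} \<longrightarrow> principal_minor A S > 0)"

definition block_vnorm :: "('k::finite \<Rightarrow> 'p::finite) \<Rightarrow> real^'k^'k \<Rightarrow> ('p \<Rightarrow> real) \<Rightarrow> real^'k \<Rightarrow> real" where
  "block_vnorm blk C c x = Max (range (\<lambda>i. norm (matrix_inv C *v blk_proj blk i x) / c i))"

definition weighted_inf_mat_norm :: "('p::finite \<Rightarrow> real) \<Rightarrow> real^'p^'p \<Rightarrow> real" where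
  "weighted_inf_mat_norm c A = Max (range (\<lambda>i. (1 / c i) * (\<Sum>j\<in>UNIV. \<bar>A $ i $ j\<bar> * c j)))"

definition is_best_resp :: "('k::finite \<Rightarrow> 'p) \<Rightarrow> ('p \<Rightarrow> real^'k \<Rightarrow> real) \<Rightarrow> ('p \<Rightarrow> (real^'k) set) \<Rightarrow> real^'k \<Rightarrow> 'p \<Rightarrow> real^'k \<Rightarrow> bool" where
  "is_best_resp blk f Qs x i y \<longleftrightarrow>
     y \<in> Qs i \<and> (\<forall>z\<in>Qs i. f i (blk_upd blk x i y) \<le> f i (blk_upd blk x i z))"

definition best_resp :: "('k::finite \<Rightarrow> 'p::finite) \<Rightarrow> ('p \<Rightarrow> real^'k \<Rightarrow> real) \<Rightarrow> ('p \<Rightarrow> (real^'k) set) \<Rightarrow> real^'k \<Rightarrow> real^'k" where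
  "best_resp blk f Qs x = (\<Sum>i\<in>UNIV. THE y. is_best_resp blk f Qs x i y)"

end

theory Submission
  imports Defs
begin

text \<open>A P-matrix with nonpositive off-diagonal entries admits a vector \<open>c > 0\<close> with
  \<open>\<Upsilon>\<^sub>F c > 0\<close> (induction on the index set via Schur complements), and this row dominance is
  exactly \<open>\<parallel>\<Gamma>\<^sub>F\<parallel>\<^sup>c < 1\<close>. Since \<open>\<alpha>\<^sub>i\<close> bounds the Rayleigh quotients of the scaled diagonal
  Jacobian blocks, the mean value theorem makes each partial gradient strongly monotone on
  \<open>Q\<^sub>i\<close>, so best responses exist and are unique. Adding the variational inequalities characterising
  \<open>B\<^sub>i(x)\<close> and \<open>B\<^sub>i(y)\<close> and applying the mean value theorem once more yields
  \<open>\<alpha>\<^sub>i \<parallel>C\<^sub>i\<^sup>-\<^sup>1 (B\<^sub>i x - B\<^sub>i y)\<parallel> \<le> \<Sum>\<^bsub>j \<noteq> i\<^esub> \<beta>\<^sub>i\<^sub>j \<parallel>C\<^sub>j\<^sup>-\<^sup>1 (x\<^sub>j - y\<^sub>j)\<parallel>\<close>, which in the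
  weighted block norm is the contraction estimate.\<close>

lemma blk_proj_add: "blk_proj blk i (x + y) = blk_proj blk i x + blk_proj blk i y"
  by (simp add: blk_proj_def vec_eq_iff)

lemma blk_proj_diff: "blk_proj blk i (x - y) = blk_proj blk i x - blk_proj blk i y"
  by (simp add: blk_proj_def vec_eq_iff)

lemma blk_proj_scaleR: "blk_proj blk i (r *\<^sub>R x) = r *\<^sub>R blk_proj blk i x"
  by (simp add: blk_proj_def vec_eq_iff)

lemma blk_proj_blk_proj:
  "blk_proj blk i (blk_proj blk j x) = (if i = j then blk_proj blk i x else 0)"
  by (simp add: blk_proj_def vec_eq_iff)

lemma blk_proj_sum: "blk_proj blk i (\<Sum>j\<in>A. g j) = (\<Sum>j\<in>A. blk_proj blk i (g j))"
  by (induction A rule: infinite_finite_induct) (simp_all add: blk_proj_add blk_proj_def vec_eq_iff)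

lemma sum_blk_proj: "(\<Sum>i\<in>UNIV. blk_proj (blk::'k::finite \<Rightarrow> 'p::finite) i x) = x"
proof -
  have "(\<Sum>i\<in>UNIV. if blk k = i then x$k else 0) = x$k" for k
    using sum.delta'[of UNIV "blk k" "\<lambda>_. x$k"] by simp
  then show ?thesis by (simp add: vec_eq_iff blk_proj_def sum_component)
qed

lemma blk_space_iff: "v \<in> blk_space blk i \<longleftrightarrow> blk_proj blk i v = v"
  by (auto simp add: blk_proj_def blk_space_def vec_eq_iff)

lemma blk_proj_in_blk_space: "blk_proj blk i x \<in> blk_space blk i"
  by (simp add: blk_space_iff blk_proj_blk_proj)

lemma blk_proj_other_blk_space: "v \<in> blk_space blk i \<Longrightarrow> j \<noteq> i \<Longrightarrow> blk_proj blk j v = 0"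
  by (metis blk_proj_blk_proj blk_space_iff)

lemma blk_proj_sum_blk_space:
  assumes "\<And>i. g i \<in> blk_space (blk::'k::finite \<Rightarrow> 'p::finite) i"
  shows "blk_proj blk j (\<Sum>i\<in>UNIV. g i) = g j"
proof -
  have "blk_proj blk j (g i) = (if i = j then g j else 0)" for i
    using assms[of i] assms[of j] blk_proj_other_blk_space[OF assms[of i], of j]
    by (auto simp: blk_space_iff)
  then show ?thesis by (simp add: blk_proj_sum)
qed

lemma subspace_blk_space: "subspace (blk_space blk i)"
  by (auto simp add: subspace_def blk_space_def)

lemma closed_blk_space: "closed (blk_space (blk::'k::finite \<Rightarrow> 'p) i)"
proof -
  have "blk_space blk i = (\<Inter>k\<in>{k. blk k \<noteq> i}. {v::real^'k. v $ k = 0})"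
    by (auto simp: blk_space_def)
  moreover have "closed {v::real^'k. v $ k = 0}" for k
    by (rule closed_Collect_eq) (auto intro: continuous_intros)
  ultimately show ?thesis by auto
qed

lemma blk_upd_eq: "blk_upd blk x i y = x - blk_proj blk i x + blk_proj blk i y"
  by (simp add: blk_upd_def blk_proj_def vec_eq_iff)

lemma blk_upd_blk_space: "a \<in> blk_space blk i \<Longrightarrow> blk_upd blk x i a = x - blk_proj blk i x + a"
  by (simp add: blk_upd_eq blk_space_iff)

lemma blk_proj_blk_upd:
  "blk_proj blk j (blk_upd blk x i y) = (if j = i then blk_proj blk i y else blk_proj blk j x)"
  by (simp add: blk_upd_eq blk_proj_add blk_proj_diff blk_proj_blk_proj)

lemma inner_blk_proj: "blk_proj blk i u \<bullet> v = blk_proj blk i u \<bullet> blk_proj blk i v"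
  by (simp add: blk_proj_def inner_vec_def) (rule sum.cong, auto)

lemma inner_blk_space: "u \<in> blk_space blk i \<Longrightarrow> u \<bullet> v = u \<bullet> blk_proj blk i v"
  by (metis blk_space_iff inner_blk_proj)

lemma bounded_linear_blk_proj: "bounded_linear (blk_proj blk i)"
  by (simp add: linear_conv_bounded_linear[symmetric] linearI blk_proj_add blk_proj_scaleR)

lemma norm_blk_proj_le: "norm (blk_proj blk i x) \<le> norm x"
proof -
  have "blk_proj blk i x \<bullet> blk_proj blk i x \<le> x \<bullet> x"
    by (simp add: inner_vec_def blk_proj_def, intro sum_mono) auto
  then show ?thesis by (simp add: norm_le)
qed

lemma matrix_vector_mult_blk_proj:
  assumes "block_diag blk C"
  shows "C *v blk_proj blk i v = blk_proj blk i (C *v v)"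
proof -
  have "(\<Sum>l\<in>UNIV. C $ k $ l * (if blk l = i then v $ l else 0)) =
        (if blk k = i then (\<Sum>l\<in>UNIV. C $ k $ l * v $ l) else 0)" for k
    using assms by (cases "blk k = i") (auto simp: block_diag_def intro!: sum.cong sum.neutral)
  then show ?thesis by (simp add: blk_proj_def matrix_vector_mult_def vec_eq_iff)
qed

lemma matrix_inv_mult:
  fixes C :: "real^'k::finite^'k"
  assumes "invertible C"
  shows "C ** matrix_inv C = mat 1" "matrix_inv C ** C = mat 1"
proof -
  have "\<exists>A'. C ** A' = mat 1 \<and> A' ** C = mat 1" using assms by (simp add: invertible_def)
  then have "C ** matrix_inv C = mat 1 \<and> matrix_inv C ** C = mat 1"
    unfolding matrix_inv_def by (rule someI_ex)
  then show "C ** matrix_inv C = mat 1" "matrix_inv C ** C = mat 1" by auto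
qed

lemma matrix_inv_blk_proj:
  fixes C :: "real^'k::finite^'k"
  assumes "block_diag blk C" "invertible C"
  shows "matrix_inv C *v blk_proj blk i v = blk_proj blk i (matrix_inv C *v v)"
proof -
  let ?D = "matrix_inv C"
  have "?D *v blk_proj blk i v = ?D *v blk_proj blk i (C *v (?D *v v))"
    by (simp add: matrix_vector_mul_assoc matrix_inv_mult[OF assms(2)])
  also have "\<dots> = ?D *v (C *v blk_proj blk i (?D *v v))"
    by (simp add: matrix_vector_mult_blk_proj[OF assms(1)])
  also have "\<dots> = blk_proj blk i (?D *v v)"
    by (simp add: matrix_vector_mul_assoc matrix_inv_mult[OF assms(2)])
  finally show ?thesis .
qed

lemma inner_matrix_vector_mult_transpose: "(A *v x) \<bullet> y = x \<bullet> (transpose A *v y)"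
  for A :: "real^'n::finite^'m::finite"
  by (metis dot_lmul_matrix inner_commute transpose_matrix_vector)

section \<open>Quadratic forms on a block\<close>

definition sym_part :: "real^'k^'k \<Rightarrow> real^'k^'k" where
  "sym_part A = inverse 2 *\<^sub>R (A + transpose A)"

lemma sym_part_mult: "sym_part A *v y = inverse 2 *\<^sub>R (A *v y + transpose A *v y)"
  for A :: "real^'k::finite^'k"
  by (simp add: sym_part_def scaleR_matrix_vector_assoc[symmetric] matrix_vector_mult_add_rdistrib)

lemma inner_sym_part_self: "u \<bullet> (sym_part A *v u) = u \<bullet> (A *v u)"
  for A :: "real^'k::finite^'k"
  using inner_matrix_vector_mult_transpose[of A u u]
  by (simp add: sym_part_mult inner_add_right inner_commute)

lemma inner_sym_part_commute: "x \<bullet> (sym_part A *v y) = y \<bullet> (sym_part A *v x)"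
  for A :: "real^'k::finite^'k"
  using inner_matrix_vector_mult_transpose[of A x y] inner_matrix_vector_mult_transpose[of A y x]
  by (simp add: sym_part_mult inner_add_right inner_commute)

lemma block_sym_eigs_sym_part:
  "block_sym_eigs blk A i =
     {mu. \<exists>v. v \<in> blk_space blk i \<and> v \<noteq> 0 \<and> blk_proj blk i (sym_part A *v v) = mu *\<^sub>R v}"
  by (simp add: block_sym_eigs_def sym_part_def)

lemma block_sym_eig_quadratic_form:
  fixes A :: "real^'k::finite^'k"
  assumes "mu \<in> block_sym_eigs blk A i"
  obtains v where "v \<in> blk_space blk i" "v \<noteq> 0" "v \<bullet> (A *v v) = mu * (v \<bullet> v)"
proof -
  obtain v where v: "v \<in> blk_space blk i" "v \<noteq> 0" "blk_proj blk i (sym_part A *v v) = mu *\<^sub>R v"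
    using assms by (auto simp: block_sym_eigs_sym_part)
  have "v \<bullet> (A *v v) = v \<bullet> blk_proj blk i (sym_part A *v v)"
    using inner_blk_space[OF v(1)] by (simp add: inner_sym_part_self)
  with v that show ?thesis by simp
qed

text \<open>Eigenvectors for distinct eigenvalues of the symmetric block are orthogonal, hence
  linearly independent; so there are only finitely many eigenvalues.\<close>

lemma finite_block_sym_eigs:
  fixes A :: "real^'k::finite^'k"
  shows "finite (block_sym_eigs blk A i)"
proof -
  let ?E = "block_sym_eigs blk A i"
  let ?W = "blk_space blk i"
  define e where "e mu = (SOME v. v \<in> ?W \<and> v \<noteq> 0 \<and> blk_proj blk i (sym_part A *v v) = mu *\<^sub>R v)"
    for mu
  have e: "e mu \<in> ?W" "e mu \<noteq> 0" "blk_proj blk i (sym_part A *v e mu) = mu *\<^sub>R e mu"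
    if "mu \<in> ?E" for mu
    using someI_ex[of "\<lambda>v. v \<in> ?W \<and> v \<noteq> 0 \<and> blk_proj blk i (sym_part A *v v) = mu *\<^sub>R v"] that
    unfolding e_def block_sym_eigs_sym_part by auto
  have eig: "e m \<bullet> (sym_part A *v e m') = m' * (e m \<bullet> e m')" if "m \<in> ?E" "m' \<in> ?E" for m m'
    using inner_blk_space[OF e(1)[OF that(1)], of "sym_part A *v e m'"] e(3)[OF that(2)] by simp
  have orth: "e m1 \<bullet> e m2 = 0" if "m1 \<in> ?E" "m2 \<in> ?E" "m1 \<noteq> m2" for m1 m2
  proof -
    have "m2 * (e m1 \<bullet> e m2) = m1 * (e m2 \<bullet> e m1)"
      using eig[OF that(1,2)] eig[OF that(2,1)] inner_sym_part_commute by metis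
    then have "(m1 - m2) * (e m1 \<bullet> e m2) = 0" by (auto simp: inner_commute algebra_simps)
    then show ?thesis using that by simp
  qed
  have "inj_on e ?E"
    using orth e(2) by (metis inj_onI inner_eq_zero_iff)
  moreover have "independent (e ` ?E)"
    using orth e(2) by (intro pairwise_orthogonal_independent) (auto simp: pairwise_def orthogonal_def)
  ultimately show ?thesis
    using independent_imp_finite finite_imageD by blast
qed

lemma linear_coeff_zero_if_nonneg:
  fixes a b :: real
  assumes nonneg: "\<And>t. 0 \<le> a * t + b * t^2"
  shows "a = 0"
proof (rule ccontr)
  assume "a \<noteq> 0"
  define d where "d = \<bar>b\<bar> + 1"
  define x where "x = a / d"
  have "d > 0" "b < d" by (auto simp: d_def)
  then have "a = x * d" by (simp add: x_def)
  then have "a * (- x) + b * (- x)^2 = x^2 * (b - d)" by (simp add: power2_eq_square algebra_simps)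
  moreover have "x^2 > 0" using \<open>a \<noteq> 0\<close> \<open>a = x * d\<close> by simp
  ultimately have "a * (- x) + b * (- x)^2 < 0" using \<open>b < d\<close> by (simp add: mult_pos_neg)
  with nonneg show False by (meson not_le)
qed

lemma quadratic_form_attains_min_on_block:
  fixes A :: "real^'k::finite^'k"
  assumes "blk k0 = i"
  obtains v where "v \<in> blk_space blk i" "norm v = 1"
    "\<And>u. u \<in> blk_space blk i \<Longrightarrow> u \<bullet> (A *v u) \<ge> (v \<bullet> (A *v v)) * (norm u)^2"
proof -
  let ?W = "blk_space blk i"
  let ?K = "?W \<inter> sphere 0 1"
  let ?q = "\<lambda>u. u \<bullet> (A *v u)"
  have "axis k0 1 \<in> ?W" using assms by (auto simp: blk_space_def axis_def)
  then have "axis k0 1 \<in> ?K" by (simp add: norm_axis_1)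
  moreover have "compact ?K"
    by (intro closed_Int_compact closed_blk_space compact_sphere)
  moreover have "continuous_on ?K ?q"
    by (intro continuous_intros linear_continuous_on matrix_vector_mul_bounded_linear)
  ultimately obtain v where v: "v \<in> ?K" and vmin: "\<And>y. y \<in> ?K \<Longrightarrow> ?q v \<le> ?q y"
    using continuous_attains_inf[of ?K ?q] by blast
  have "?q u \<ge> ?q v * (norm u)^2" if u: "u \<in> ?W" for u
  proof (cases "u = 0")
    case False
    let ?u = "inverse (norm u) *\<^sub>R u"
    have "?u \<in> ?K" using False subspace_scale[OF subspace_blk_space u] by simp
    then have "?q v \<le> ?q ?u" by (rule vmin)
    also have "?q ?u = inverse (norm u)^2 * ?q u"
      by (simp add: matrix_vector_mult_scaleR power2_eq_square)
    finally show ?thesis using False by (simp add: field_simps)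
  qed simp
  with v that show ?thesis by auto
qed

text \<open>First-order optimality: perturbing the minimiser \<open>v\<close> by \<open>t w\<close> inside the block gives a
  quadratic polynomial in \<open>t\<close> that is nonnegative and vanishes at \<open>0\<close>.\<close>

lemma block_minimiser_is_eigenvector:
  fixes A :: "real^'k::finite^'k"
  assumes v: "v \<in> blk_space blk i" "norm v = 1"
    and min: "\<And>u. u \<in> blk_space blk i \<Longrightarrow> u \<bullet> (A *v u) \<ge> (v \<bullet> (A *v v)) * (norm u)^2"
  shows "blk_proj blk i (sym_part A *v v) = (v \<bullet> (A *v v)) *\<^sub>R v"
proof -
  let ?W = "blk_space blk i"
  define m where "m = v \<bullet> (A *v v)"
  have vv: "v \<bullet> v = 1" using v(2) by (simp add: norm_eq_1)
  have stationary: "w \<bullet> (sym_part A *v v) = m * (w \<bullet> v)" if w: "w \<in> ?W" for w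
  proof -
    have "0 \<le> (2 * (w \<bullet> (sym_part A *v v) - m * (w \<bullet> v))) * t
              + (w \<bullet> (A *v w) - m * (w \<bullet> w)) * t^2" for t
    proof -
      have "v + t *\<^sub>R w \<in> ?W" using v(1) w subspace_blk_space by (metis subspace_add subspace_scale)
      then have "m * (norm (v + t *\<^sub>R w))^2 \<le> (v + t *\<^sub>R w) \<bullet> (A *v (v + t *\<^sub>R w))"
        using min unfolding m_def by blast
      moreover have "v \<bullet> (A *v w) = w \<bullet> (transpose A *v v)"
        by (metis inner_commute inner_matrix_vector_mult_transpose)
      ultimately show ?thesis
        unfolding power2_norm_eq_inner
        by (simp add: m_def sym_part_mult matrix_vector_right_distrib matrix_vector_mult_scaleR
            inner_add_left inner_add_right vv inner_commute power2_eq_square algebra_simps)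
    qed
    then show ?thesis using linear_coeff_zero_if_nonneg by fastforce
  qed
  define w where "w = blk_proj blk i (sym_part A *v v) - m *\<^sub>R v"
  have wW: "w \<in> ?W"
    unfolding w_def using subspace_blk_space v(1) blk_proj_in_blk_space
    by (metis subspace_diff subspace_scale)
  have "w \<bullet> w = w \<bullet> (blk_proj blk i (sym_part A *v v) - m *\<^sub>R v)"
    by (simp only: w_def)
  also have "\<dots> = w \<bullet> (sym_part A *v v) - m * (w \<bullet> v)"
    using inner_blk_space[OF wW] by (simp add: inner_diff_right)
  also have "\<dots> = 0" using stationary[OF wW] by simp
  finally show ?thesis by (simp add: w_def m_def)
qed

lemma block_lambda_least_quadratic_form:
  fixes A :: "real^'k::finite^'k" and blk :: "'k \<Rightarrow> 'p"
  assumes "blk k0 = i"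
  obtains v where "v \<in> blk_space blk i" "norm v = 1" "block_lambda_least blk A i = v \<bullet> (A *v v)"
    "\<And>u. u \<in> blk_space blk i \<Longrightarrow> u \<bullet> (A *v u) \<ge> block_lambda_least blk A i * (norm u)^2"
proof -
  obtain v where v: "v \<in> blk_space blk i" "norm v = 1"
    and min: "\<And>u. u \<in> blk_space blk i \<Longrightarrow> u \<bullet> (A *v u) \<ge> (v \<bullet> (A *v v)) * (norm u)^2"
    using quadratic_form_attains_min_on_block[of blk k0 i A, OF assms] by blast
  have "v \<bullet> (A *v v) \<in> block_sym_eigs blk A i"
    unfolding block_sym_eigs_sym_part using v block_minimiser_is_eigenvector[OF v min] by auto
  moreover have "v \<bullet> (A *v v) \<le> mu" if mu: "mu \<in> block_sym_eigs blk A i" for mu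
  proof -
    obtain x where x: "x \<in> blk_space blk i" "x \<noteq> 0" "x \<bullet> (A *v x) = mu * (x \<bullet> x)"
      using block_sym_eig_quadratic_form[OF mu] by blast
    then show ?thesis using min[OF x(1)] by (simp add: power2_norm_eq_inner)
  qed
  ultimately have "block_lambda_least blk A i = v \<bullet> (A *v v)"
    unfolding block_lambda_least_def by (intro Min_eqI finite_block_sym_eigs) auto
  with v min that show ?thesis by simp
qed

section \<open>Z-matrices with the P-property\<close>

definition principal_embed :: "'n::finite set \<Rightarrow> real^'n^'n \<Rightarrow> real^'n^'n" where
  "principal_embed T A = (\<chi> i j. if i \<in> T \<and> j \<in> T then A$i$j else if i = j then 1 else 0)"

lemma det_principal_embed: "det (principal_embed T A) = principal_minor A T"
  for A :: "real^'n::finite^'n"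
proof -
  have "det (principal_embed T A) =
      (\<Sum>p\<in>{p. p permutes T}. of_int (sign p) * (\<Prod>i\<in>UNIV. principal_embed T A $ i $ p i))"
    unfolding det_def
  proof (rule sum.mono_neutral_right)
    show "finite {p. p permutes (UNIV::'n set)}" by (simp add: finite_permutations)
    show "{p. p permutes T} \<subseteq> {p. p permutes (UNIV::'n set)}" using permutes_subset by blast
    show "\<forall>p\<in>{p. p permutes (UNIV::'n set)} - {p. p permutes T}.
        of_int (sign p) * (\<Prod>i\<in>UNIV. principal_embed T A $ i $ p i) = 0"
    proof
      fix p assume "p \<in> {p. p permutes (UNIV::'n set)} - {p. p permutes T}"
      then obtain x where "x \<notin> T" "p x \<noteq> x"
        using permutes_superset[of p UNIV T] by auto
      then have "principal_embed T A $ x $ p x = 0" by (simp add: principal_embed_def)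
      then show "of_int (sign p) * (\<Prod>i\<in>UNIV. principal_embed T A $ i $ p i) = 0"
        by (metis UNIV_I finite mult_zero_right prod_zero)
    qed
  qed
  also have "\<dots> = principal_minor A T"
    unfolding principal_minor_def
  proof (rule sum.cong[OF refl])
    fix p assume "p \<in> {p. p permutes T}"
    then have p: "p permutes T" by simp
    have "(\<Prod>i\<in>UNIV. principal_embed T A $ i $ p i) = (\<Prod>i\<in>T. A $ i $ p i)"
      using permutes_not_in[OF p] permutes_in_image[OF p]
      by (intro prod.mono_neutral_cong_right) (auto simp: principal_embed_def)
    then show "of_int (sign p) * (\<Prod>i\<in>UNIV. principal_embed T A $ i $ p i)
        = of_int (sign p) * (\<Prod>i\<in>T. A $ i $ p i)" by simp
  qed
  finally show ?thesis .
qed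

lemma principal_minor_singleton: "principal_minor A {k} = A$k$k"
  unfolding principal_minor_def by (simp add: permutes_sing sign_id)

lemma P_matrix_diag_pos: "P_matrix A \<Longrightarrow> A$k$k > 0"
  by (metis P_matrix_def insert_not_empty principal_minor_singleton)

lemma det_eliminate_column:
  fixes M :: "real^'n::finite^'n"
  assumes "finite W" "k \<notin> W"
  shows "det (\<chi> i. if i\<in>W then row i M - (M$i$k / M$k$k) *s row k M else row i M) = det M"
  using assms
proof (induction W rule: finite_induct)
  case empty
  have "(\<chi> i. if i\<in>{} then row i M - (M$i$k / M$k$k) *s row k M else row i M) = M"
    by (vector row_def)
  then show ?case by simp
next
  case (insert w W)
  let ?R = "(\<chi> i. if i\<in>W then row i M - (M$i$k / M$k$k) *s row k M else row i M)"
  have wk: "w \<noteq> k" using insert by auto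
  have "(\<chi> i. if i\<in>insert w W then row i M - (M$i$k / M$k$k) *s row k M else row i M)
     = (\<chi> i. if i = w then row w ?R + (-(M$w$k / M$k$k)) *s row k ?R else row i ?R)"
    using insert wk by (vector row_def)
  then show ?case using insert det_row_operation[OF wk, of ?R "-(M$w$k / M$k$k)"] by simp
qed

lemma det_expand_unit_column:
  fixes N M :: "real^'n::finite^'n"
  assumes N0: "\<And>i. i \<noteq> k \<Longrightarrow> N$i$k = 0"
    and Mk: "\<And>j. M$k$j = (if j = k then 1 else 0)"
    and NM: "\<And>i j. i \<noteq> k \<Longrightarrow> j \<noteq> k \<Longrightarrow> N$i$j = M$i$j"
  shows "det N = N$k$k * det M"
proof -
  let ?P0 = "{p. p permutes (UNIV::'n set) \<and> p k = k}"
  let ?X = "\<lambda>p. (\<Prod>i\<in>UNIV-{k}. M $ i $ p i)"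
  have fin: "finite {p. p permutes (UNIV::'n set)}" by (simp add: finite_permutations)
  have sub: "?P0 \<subseteq> {p. p permutes (UNIV::'n set)}" by auto
  have "det N = (\<Sum>p\<in>?P0. of_int (sign p) * (\<Prod>i\<in>UNIV. N $ i $ p i))"
    unfolding det_def
  proof (rule sum.mono_neutral_right[OF fin sub], rule ballI)
    fix p assume "p \<in> {p. p permutes (UNIV::'n set)} - ?P0"
    then have pp: "p permutes UNIV" and pk: "p k \<noteq> k" by auto
    let ?i = "inv p k"
    have pi: "p ?i = k" using permutes_inverses[OF pp] by simp
    have "?i \<noteq> k" using pi pk by auto
    then have "N $ ?i $ p ?i = 0" using pi N0 by simp
    then have "(\<Prod>i\<in>UNIV. N $ i $ p i) = 0" by (meson UNIV_I finite prod_zero)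
    then show "of_int (sign p) * (\<Prod>i\<in>UNIV. N $ i $ p i) = 0" by simp
  qed
  also have "\<dots> = (\<Sum>p\<in>?P0. N$k$k * (of_int (sign p) * ?X p))"
  proof (rule sum.cong[OF refl])
    fix p assume "p \<in> ?P0"
    then have pp: "p permutes UNIV" and pk: "p k = k" by auto
    have "(\<Prod>i\<in>UNIV. N $ i $ p i) = N $ k $ p k * (\<Prod>i\<in>UNIV-{k}. N $ i $ p i)"
      by (simp add: prod.remove)
    also have "(\<Prod>i\<in>UNIV-{k}. N $ i $ p i) = ?X p"
    proof (rule prod.cong[OF refl])
      fix i assume "i \<in> UNIV - {k}"
      then have ik: "i \<noteq> k" by auto
      then have "p i \<noteq> k" using pk permutes_inj[OF pp] by (metis injD)
      then show "N $ i $ p i = M $ i $ p i" using NM ik by simp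
    qed
    finally show "of_int (sign p) * (\<Prod>i\<in>UNIV. N $ i $ p i) = N$k$k * (of_int (sign p) * ?X p)"
      using pk by simp
  qed
  also have "\<dots> = N$k$k * (\<Sum>p\<in>?P0. of_int (sign p) * ?X p)"
    by (simp add: sum_distrib_left)
  also have "(\<Sum>p\<in>?P0. of_int (sign p) * ?X p) = det M"
    unfolding det_def
  proof (rule sym, rule sum.mono_neutral_cong_right[OF fin sub])
    show "\<forall>p\<in>{p. p permutes (UNIV::'n set)} - ?P0. of_int (sign p) * (\<Prod>i\<in>UNIV. M $ i $ p i) = 0"
    proof
      fix p assume "p \<in> {p. p permutes (UNIV::'n set)} - ?P0"
      then have "p k \<noteq> k" by auto
      then have "M $ k $ p k = 0" using Mk by simp
      then have "(\<Prod>i\<in>UNIV. M $ i $ p i) = 0" by (meson UNIV_I finite prod_zero)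
      then show "of_int (sign p) * (\<Prod>i\<in>UNIV. M $ i $ p i) = 0" by simp
    qed
    fix p assume "p \<in> ?P0"
    then have pk: "p k = k" by auto
    have "(\<Prod>i\<in>UNIV. M $ i $ p i) = M $ k $ p k * ?X p" by (simp add: prod.remove)
    then show "of_int (sign p) * (\<Prod>i\<in>UNIV. M $ i $ p i) = of_int (sign p) * ?X p"
      using pk Mk by simp
  qed
  finally show ?thesis .
qed

definition schur_complement :: "real^'n^'n \<Rightarrow> 'n \<Rightarrow> real^'n^'n" where
  "schur_complement A k = (\<chi> i j. A$i$j - A$i$k * A$k$j / A$k$k)"

lemma principal_minor_insert_schur_complement:
  fixes A :: "real^'n::finite^'n"
  assumes kT: "k \<notin> T" and a: "A$k$k \<noteq> 0"
  shows "principal_minor A (insert k T) = A$k$k * principal_minor (schur_complement A k) T"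
proof -
  let ?E = "principal_embed (insert k T) A"
  let ?N = "(\<chi> i. if i\<in>UNIV-{k} then row i ?E - (?E$i$k / ?E$k$k) *s row k ?E else row i ?E)"
  have Ekk: "?E$k$k = A$k$k" by (simp add: principal_embed_def)
  have "det ?N = ?N$k$k * det (principal_embed T (schur_complement A k))"
  proof (rule det_expand_unit_column)
    fix i assume "i \<noteq> k"
    then show "?N$i$k = 0" using a Ekk by (simp add: row_def)
  next
    fix j show "principal_embed T (schur_complement A k) $ k $ j = (if j = k then 1 else 0)"
      using kT by (simp add: principal_embed_def)
  next
    fix i j assume "i \<noteq> k" "j \<noteq> k"
    then show "?N$i$j = principal_embed T (schur_complement A k) $ i $ j"
      using kT a Ekk
      by (cases "i\<in>T"; cases "j\<in>T") (simp_all add: row_def principal_embed_def schur_complement_def)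
  qed
  moreover have "det ?N = det ?E" by (rule det_eliminate_column) auto
  moreover have "?N$k$k = A$k$k" by (simp add: row_def principal_embed_def)
  ultimately show ?thesis by (simp add: det_principal_embed)
qed

text \<open>Inductive step for positive vectors of Z-matrices: keep the vector \<open>c'\<close> that works for
  the Schur complement on \<open>S\<close> and choose \<open>c k = \<delta> - s / A$k$k\<close>, where \<open>s\<close> is the contribution of
  \<open>S\<close> to row \<open>k\<close>; then row \<open>k\<close> equals \<open>A$k$k \<delta>\<close> and row \<open>i \<in> S\<close> equals its Schur row plus
  \<open>A$i$k \<delta>\<close>, which stays positive for small \<open>\<delta> > 0\<close>.\<close>

lemma Z_matrix_positive_vector_insert:
  fixes A :: "real^'n::finite^'n"
  assumes S: "finite S" "k \<notin> S"
    and Z: "\<And>i j. i \<in> insert k S \<Longrightarrow> j \<in> insert k S \<Longrightarrow> i \<noteq> j \<Longrightarrow> A$i$j \<le> 0"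
    and a: "A$k$k > 0"
    and c'pos: "\<And>i. i \<in> S \<Longrightarrow> c' i > 0"
    and c'row: "\<And>i. i \<in> S \<Longrightarrow> (\<Sum>j\<in>S. schur_complement A k $ i $ j * c' j) > 0"
  obtains c where "\<And>i. i \<in> insert k S \<Longrightarrow> c i > 0"
    "\<And>i. i \<in> insert k S \<Longrightarrow> (\<Sum>j\<in>insert k S. A$i$j * c j) > 0"
proof -
  define r where "r i = (\<Sum>j\<in>S. schur_complement A k $ i $ j * c' j)" for i
  define \<delta> where "\<delta> = Min (insert 1 ((\<lambda>i. r i / (\<bar>A$i$k\<bar> + 1)) ` S))"
  define s where "s = (\<Sum>j\<in>S. A$k$j * c' j)"
  define c where "c j = (if j = k then \<delta> - s / A$k$k else c' j)" for j
  have \<delta>_pos: "\<delta> > 0" unfolding \<delta>_def using S c'row r_def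
    by (subst Min_gr_iff) (auto intro!: divide_pos_pos)
  have \<delta>_le: "\<delta> * (\<bar>A$i$k\<bar> + 1) \<le> r i" if "i \<in> S" for i
  proof -
    have "\<delta> \<le> r i / (\<bar>A$i$k\<bar> + 1)" unfolding \<delta>_def using S that by (intro Min_le) auto
    then show ?thesis by (simp add: field_simps)
  qed
  have "s \<le> 0" unfolding s_def
    using S Z c'pos by (intro sum_nonpos mult_nonpos_nonneg) (auto intro: less_imp_le)
  have row: "(\<Sum>j\<in>insert k S. A$i$j * c j) = A$i$k * \<delta> + r i" for i
  proof -
    have "(\<Sum>j\<in>S. A$i$j * c' j) = (\<Sum>j\<in>S. schur_complement A k $ i $ j * c' j + A$i$k * (A$k$j * c' j) / A$k$k)"
      using a by (intro sum.cong) (auto simp: schur_complement_def field_simps)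
    also have "\<dots> = r i + A$i$k * s / A$k$k"
      by (simp add: sum.distrib r_def s_def sum_divide_distrib sum_distrib_left)
    moreover have "(\<Sum>j\<in>S. A$i$j * c j) = (\<Sum>j\<in>S. A$i$j * c' j)"
      using S by (intro sum.cong) (auto simp: c_def)
    ultimately have "(\<Sum>j\<in>S. A$i$j * c j) = r i + A$i$k * s / A$k$k" by simp
    then show ?thesis using S by (simp add: c_def algebra_simps)
  qed
  show ?thesis
  proof (rule that)
    fix i assume "i \<in> insert k S"
    then consider "i = k" | "i \<in> S" "i \<noteq> k" using S by auto
    moreover have "s / A$k$k \<le> 0" using \<open>s \<le> 0\<close> a by (simp add: divide_nonpos_pos)
    ultimately show "c i > 0" using \<delta>_pos c'pos by cases (auto simp: c_def)
  next
    fix i assume "i \<in> insert k S"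
    then consider "i = k" | "i \<in> S" "i \<noteq> k" using S by auto
    then show "(\<Sum>j\<in>insert k S. A$i$j * c j) > 0"
    proof cases
      case 1
      have "r k = 0" unfolding r_def using a by (simp add: schur_complement_def)
      then show ?thesis using 1 a \<delta>_pos by (simp add: row)
    next
      case 2
      have "A$i$k \<le> 0" using Z 2 by auto
      then have "- (A$i$k * \<delta>) < r i" using \<delta>_le[OF 2(1)] \<delta>_pos by (simp add: algebra_simps)
      then show ?thesis by (simp add: row)
    qed
  qed
qed

lemma Z_matrix_positive_vector_of_minors:
  fixes A :: "real^'n::finite^'n"
  assumes "finite S"
    and "\<And>i j. i \<in> S \<Longrightarrow> j \<in> S \<Longrightarrow> i \<noteq> j \<Longrightarrow> A$i$j \<le> 0"
    and "\<And>T. T \<subseteq> S \<Longrightarrow> T \<noteq> {} \<Longrightarrow> principal_minor A T > 0"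
  shows "\<exists>c. (\<forall>i\<in>S. c i > 0) \<and> (\<forall>i\<in>S. (\<Sum>j\<in>S. A$i$j * c j) > 0)"
  using assms
proof (induction S arbitrary: A rule: finite_induct)
  case (insert k S)
  let ?B = "schur_complement A k"
  have a: "A$k$k > 0" using insert.prems(2)[of "{k}"] by (simp add: principal_minor_singleton)
  have "\<exists>c'. (\<forall>i\<in>S. c' i > 0) \<and> (\<forall>i\<in>S. (\<Sum>j\<in>S. ?B$i$j * c' j) > 0)"
  proof (rule insert.IH)
    fix i j assume "i \<in> S" "j \<in> S" "i \<noteq> j"
    then have "A$i$k \<le> 0" "A$k$j \<le> 0" "A$i$j \<le> 0"
      using insert.prems(1)[of i k] insert.prems(1)[of k j] insert.prems(1)[of i j] insert.hyps(2)
      by auto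
    moreover from this have "A$i$k * A$k$j / A$k$k \<ge> 0" using a by (simp add: mult_nonpos_nonpos)
    ultimately show "?B$i$j \<le> 0" by (simp add: schur_complement_def)
  next
    fix T assume T: "T \<subseteq> S" "T \<noteq> {}"
    then have "principal_minor A (insert k T) > 0" by (intro insert.prems(2)) auto
    moreover have "k \<notin> T" using T insert.hyps(2) by blast
    moreover have "principal_minor A (insert k T) = A$k$k * principal_minor ?B T"
      using principal_minor_insert_schur_complement[of k T A] \<open>k \<notin> T\<close> a by simp
    ultimately show "principal_minor ?B T > 0" using a by (simp add: zero_less_mult_iff)
  qed
  then obtain c' where c': "\<And>i. i \<in> S \<Longrightarrow> c' i > 0"
    and c'_row: "\<And>i. i \<in> S \<Longrightarrow> (\<Sum>j\<in>S. ?B$i$j * c' j) > 0"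
    by blast
  obtain c where "\<And>i. i \<in> insert k S \<Longrightarrow> c i > 0"
    "\<And>i. i \<in> insert k S \<Longrightarrow> (\<Sum>j\<in>insert k S. A$i$j * c j) > 0"
    using Z_matrix_positive_vector_insert[OF insert.hyps insert.prems(1) a c' c'_row] by blast
  then show ?case by blast
qed simp

lemma P_matrix_Z_matrix_positive_vector:
  fixes A :: "real^'n::finite^'n"
  assumes "\<And>i j. i \<noteq> j \<Longrightarrow> A$i$j \<le> 0" and "P_matrix A"
  obtains c where "\<And>i. c i > 0" "\<And>i. (\<Sum>j\<in>UNIV. A$i$j * c j) > 0"
proof -
  have "\<exists>c. (\<forall>i\<in>UNIV. c i > 0) \<and> (\<forall>i\<in>UNIV. (\<Sum>j\<in>UNIV. A$i$j * c j) > 0)"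
    using assms by (intro Z_matrix_positive_vector_of_minors) (auto simp: P_matrix_def)
  with that show ?thesis by blast
qed


section \<open>Weighted block norms\<close>

lemma weighted_row_sum_ratio:
  fixes a c :: "'p::finite \<Rightarrow> real" and b :: "'p \<Rightarrow> 'p \<Rightarrow> real"
  assumes "a i > 0" "\<And>j. b i j \<ge> 0"
  shows "(\<Sum>j\<in>UNIV. \<bar>(\<chi> i j. if i = j then 0 else b i j / a i) $ i $ j\<bar> * c j)
           = (\<Sum>j\<in>UNIV-{i}. b i j * c j) / a i"
proof -
  have "(\<Sum>j\<in>UNIV. \<bar>(\<chi> i j. if i = j then 0 else b i j / a i) $ i $ j\<bar> * c j)
      = (\<Sum>j\<in>UNIV-{i}. \<bar>(\<chi> i j. if i = j then 0 else b i j / a i) $ i $ j\<bar> * c j)"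
    by (simp add: sum.remove[of UNIV i])
  also have "\<dots> = (\<Sum>j\<in>UNIV-{i}. b i j * c j / a i)"
    using assms by (intro sum.cong) auto
  finally show ?thesis by (simp add: sum_divide_distrib)
qed

lemma row_sum_diag_minus_offdiag:
  fixes a c :: "'p::finite \<Rightarrow> real" and b :: "'p \<Rightarrow> 'p \<Rightarrow> real"
  shows "(\<Sum>j\<in>UNIV. (\<chi> i j. if i = j then a i else - b i j) $ i $ j * c j)
           = a i * c i - (\<Sum>j\<in>UNIV-{i}. b i j * c j)"
proof -
  have "(\<Sum>j\<in>UNIV-{i}. (\<chi> i j. if i = j then a i else - b i j) $ i $ j * c j)
      = (\<Sum>j\<in>UNIV-{i}. - (b i j * c j))"
    by (intro sum.cong) auto
  then show ?thesis by (simp add: sum.remove[of UNIV i] sum_negf)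
qed

lemma weighted_inf_mat_norm_ratio_lt_1:
  fixes a c :: "'p::finite \<Rightarrow> real" and b :: "'p \<Rightarrow> 'p \<Rightarrow> real"
  assumes a: "\<And>i. a i > 0" and b: "\<And>i j. b i j \<ge> 0" and c: "\<And>i. c i > 0"
    and dominant: "\<And>i. (\<Sum>j\<in>UNIV-{i}. b i j * c j) < a i * c i"
  shows "weighted_inf_mat_norm c (\<chi> i j. if i = j then 0 else b i j / a i) < 1"
proof -
  let ?G = "\<chi> i j. if i = j then 0 else b i j / a i"
  have "1 / c i * ((\<Sum>j\<in>UNIV-{i}. b i j * c j) / a i) < 1" for i
    using dominant[of i] a[of i] c[of i] by (simp add: field_simps)
  then have "1 / c i * (\<Sum>j\<in>UNIV. \<bar>?G $ i $ j\<bar> * c j) < 1" for i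
    by (simp only: weighted_row_sum_ratio[OF a b])
  then show ?thesis
    unfolding weighted_inf_mat_norm_def by (subst Max_less_iff) auto
qed

lemma norm_blk_le_block_vnorm:
  fixes blk :: "'k::finite \<Rightarrow> 'p::finite"
  assumes "c j > 0"
  shows "norm (matrix_inv C *v blk_proj blk j w) \<le> c j * block_vnorm blk C c w"
proof -
  have "norm (matrix_inv C *v blk_proj blk j w) / c j \<le> block_vnorm blk C c w"
    unfolding block_vnorm_def by (rule Max_ge) auto
  then show ?thesis using assms by (simp add: divide_le_eq mult.commute)
qed

lemma block_vnorm_nonneg:
  fixes blk :: "'k::finite \<Rightarrow> 'p::finite"
  assumes "\<And>i. c i > 0"
  shows "block_vnorm blk C c w \<ge> 0"
proof -
  have "0 \<le> norm (matrix_inv C *v blk_proj blk undefined w)" by simp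
  also have "\<dots> \<le> c undefined * block_vnorm blk C c w" by (rule norm_blk_le_block_vnorm[OF assms])
  finally show ?thesis using assms[of undefined] by (simp add: zero_le_mult_iff)
qed

lemma block_vnorm_le_weighted_inf_mat_norm:
  fixes blk :: "'k::finite \<Rightarrow> 'p::finite" and a c :: "'p \<Rightarrow> real" and b :: "'p \<Rightarrow> 'p \<Rightarrow> real"
  assumes a: "\<And>i. a i > 0" and b: "\<And>i j. b i j \<ge> 0" and c: "\<And>i. c i > 0"
    and bound: "\<And>i. a i * norm (matrix_inv C *v blk_proj blk i u)
                  \<le> (\<Sum>j\<in>UNIV-{i}. b i j * norm (matrix_inv C *v blk_proj blk j w))"
  shows "block_vnorm blk C c u
    \<le> weighted_inf_mat_norm c (\<chi> i j. if i = j then 0 else b i j / a i) * block_vnorm blk C c w"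
proof -
  let ?G = "\<chi> i j. if i = j then 0 else b i j / a i"
  define N where "N = block_vnorm blk C c w"
  have N: "norm (matrix_inv C *v blk_proj blk j w) \<le> c j * N" for j
    unfolding N_def by (rule norm_blk_le_block_vnorm[OF c])
  have "norm (matrix_inv C *v blk_proj blk i u) / c i \<le> weighted_inf_mat_norm c ?G * N" for i
  proof -
    have "a i * norm (matrix_inv C *v blk_proj blk i u) \<le> (\<Sum>j\<in>UNIV-{i}. b i j * (c j * N))"
      using bound[of i] b N by (meson order_trans sum_mono mult_left_mono)
    also have "\<dots> = (\<Sum>j\<in>UNIV-{i}. b i j * c j) * N"
      by (simp add: sum_distrib_left sum_distrib_right mult_ac)
    finally have "norm (matrix_inv C *v blk_proj blk i u) \<le> (\<Sum>j\<in>UNIV-{i}. b i j * c j) * N / a i"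
      using a[of i] by (simp add: le_divide_eq mult.commute)
    then have "norm (matrix_inv C *v blk_proj blk i u) / c i
        \<le> (\<Sum>j\<in>UNIV-{i}. b i j * c j) * N / a i / c i"
      using c[of i] by (rule divide_right_mono[OF _ less_imp_le])
    also have "\<dots> = 1 / c i * (\<Sum>j\<in>UNIV. \<bar>?G $ i $ j\<bar> * c j) * N"
      by (simp only: weighted_row_sum_ratio[OF a b]) simp
    also have "\<dots> \<le> weighted_inf_mat_norm c ?G * N"
      unfolding weighted_inf_mat_norm_def using block_vnorm_nonneg[OF c] N_def
      by (intro mult_right_mono Max_ge) auto
    finally show ?thesis .
  qed
  then show ?thesis
    unfolding N_def block_vnorm_def[of blk C c u] by (simp add: Max_le_iff)
qed

lemma bounded_linear_block_mult:
  "bounded_linear (\<lambda>v. blk_proj blk i (A *v blk_proj blk j v))"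
  by (intro bounded_linear_compose[OF bounded_linear_blk_proj] bounded_linear_compose[OF
      matrix_vector_mul_bounded_linear bounded_linear_blk_proj])

section \<open>Nash equilibrium problems\<close>

locale nep =
  fixes blk :: "'k::finite \<Rightarrow> 'p::finite"
    and Qs :: "'p \<Rightarrow> (real^'k) set"
    and f :: "'p \<Rightarrow> real^'k \<Rightarrow> real"
    and grad :: "'p \<Rightarrow> real^'k \<Rightarrow> real^'k"
    and hess :: "'p \<Rightarrow> real^'k \<Rightarrow> real^'k^'k"
    and U :: "(real^'k) set"
    and C :: "real^'k^'k"
  assumes blocks_nonempty: "surj blk"
    and Q_sub: "\<And>i. Qs i \<subseteq> blk_space blk i"
    and Q_ne: "\<And>i. Qs i \<noteq> {}"
    and Q_closed: "\<And>i. closed (Qs i)"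
    and Q_convex: "\<And>i. convex (Qs i)"
    and Q_U: "prod_set blk Qs \<subseteq> U"
    and f_deriv: "\<And>i x. x \<in> U \<Longrightarrow> (f i has_derivative (\<lambda>h. grad i x \<bullet> h)) (at x)"
    and grad_deriv: "\<And>i x. x \<in> U \<Longrightarrow> (grad i has_derivative (\<lambda>h. hess i x *v h)) (at x)"
    and hess_bdd: "\<And>i. bounded (hess i ` prod_set blk Qs)"
    and C_blockdiag: "block_diag blk C"
    and C_invertible: "invertible C"
begin

abbreviation "Q \<equiv> prod_set blk Qs"
abbreviation "Cinv \<equiv> matrix_inv C"
abbreviation "SJ \<equiv> scaled_jac blk C hess"
abbreviation "alpha \<equiv> alpha_min blk C hess Q"
abbreviation "beta \<equiv> beta_max blk C hess Q"

lemma Qs_blk_space: "y \<in> Qs i \<Longrightarrow> y \<in> blk_space blk i"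
  using Q_sub by blast

lemma mem_Q_iff: "x \<in> Q \<longleftrightarrow> (\<forall>i. blk_proj blk i x \<in> Qs i)"
  by (simp add: prod_set_def)

lemma blk_proj_Qs: "y \<in> Qs i \<Longrightarrow> blk_proj blk i y = y"
  by (rule blk_space_iff[THEN iffD1, OF Qs_blk_space])

lemma blk_upd_in_Q: "x \<in> Q \<Longrightarrow> y \<in> Qs i \<Longrightarrow> blk_upd blk x i y \<in> Q"
  unfolding mem_Q_iff blk_proj_blk_upd by (simp add: blk_proj_Qs)

lemma convex_Q: "convex Q"
proof (rule convexI)
  fix x y u v assume "x \<in> Q" "y \<in> Q" "0 \<le> u" "0 \<le> v" "u + v = (1::real)"
  then show "u *\<^sub>R x + v *\<^sub>R y \<in> Q"
    using Q_convex unfolding mem_Q_iff by (simp add: blk_proj_add blk_proj_scaleR convex_def)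
qed

lemma Q_nonempty: "Q \<noteq> {}"
proof -
  have "\<forall>i. \<exists>y. y \<in> Qs i" using Q_ne by blast
  then obtain q where q: "\<And>i. q i \<in> Qs i" by metis
  then have "(\<Sum>i\<in>UNIV. q i) \<in> Q"
    by (simp add: mem_Q_iff blk_proj_sum_blk_space Qs_blk_space)
  then show ?thesis by blast
qed

lemma segment_in_Q: "p0 \<in> Q \<Longrightarrow> p1 \<in> Q \<Longrightarrow> 0 \<le> t \<Longrightarrow> t \<le> 1 \<Longrightarrow> p0 + t *\<^sub>R (p1 - p0) \<in> Q"
  using convex_Q unfolding convex_alt by (simp add: algebra_simps)

lemma segment_in_Qs: "a \<in> Qs i \<Longrightarrow> b \<in> Qs i \<Longrightarrow> 0 \<le> t \<Longrightarrow> t \<le> 1 \<Longrightarrow> a + t *\<^sub>R (b - a) \<in> Qs i"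
  using Q_convex[of i] unfolding convex_alt by (simp add: algebra_simps)

lemma C_Cinv: "C *v (Cinv *v v) = v" "Cinv *v (C *v v) = v"
  by (simp_all add: matrix_vector_mul_assoc matrix_inv_mult[OF C_invertible])

lemma Cinv_blk_space: "d \<in> blk_space blk i \<Longrightarrow> Cinv *v d \<in> blk_space blk i"
  by (metis matrix_inv_blk_proj[OF C_blockdiag C_invertible] blk_proj_in_blk_space blk_space_iff)

lemma norm_le_Cinv: obtains K where "K > 0" "\<And>d. norm d \<le> K * norm (Cinv *v d)"
proof
  let ?K = "onorm ((*v) C) + 1"
  show "?K > 0" using onorm_pos_le[OF matrix_vector_mul_bounded_linear, of C] by linarith
  fix d
  have "norm d \<le> onorm ((*v) C) * norm (Cinv *v d)"
    using onorm[OF matrix_vector_mul_bounded_linear, of C "Cinv *v d"] by (simp add: C_Cinv)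
  then show "norm d \<le> ?K * norm (Cinv *v d)"
    unfolding distrib_right using norm_ge_zero[of "Cinv *v d"] by linarith
qed

lemma hess_entry_bound: obtains B where "\<And>z i k l. z \<in> Q \<Longrightarrow> \<bar>hess i z $ k $ l\<bar> \<le> B"
proof -
  have "\<forall>i. \<exists>B. \<forall>z\<in>Q. norm (hess i z) \<le> B" using hess_bdd by (auto simp: bounded_iff)
  then obtain B where B: "\<And>i z. z \<in> Q \<Longrightarrow> norm (hess i z) \<le> B i" by metis
  have "\<bar>hess i z $ k $ l\<bar> \<le> (\<Sum>i\<in>UNIV. \<bar>B i\<bar>)" if "z \<in> Q" for i z k l
  proof -
    have "\<bar>hess i z $ k $ l\<bar> \<le> norm (hess i z $ k)" by (rule component_le_norm_cart)
    also have "\<dots> \<le> norm (hess i z)" by (rule Finite_Cartesian_Product.norm_nth_le)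
    also have "\<dots> \<le> \<bar>B i\<bar>" using B[OF that, of i] by linarith
    also have "\<dots> \<le> (\<Sum>i\<in>UNIV. \<bar>B i\<bar>)" by (rule member_le_sum) auto
    finally show ?thesis .
  qed
  then show ?thesis using that by blast
qed

lemma scaled_jac_bound: obtains L where "\<And>z v. z \<in> Q \<Longrightarrow> norm (SJ z *v v) \<le> L * norm v"
proof -
  obtain B where B: "\<And>z i k l. z \<in> Q \<Longrightarrow> \<bar>hess i z $ k $ l\<bar> \<le> B" using hess_entry_bound by blast
  define KJ where "KJ = real CARD('k) * real CARD('k) * B"
  let ?oC = "onorm ((*v) C)" and ?oCt = "onorm ((*v) (transpose C))"
  have oC: "norm (C *v v) \<le> ?oC * norm v" "norm (transpose C *v v) \<le> ?oCt * norm v" for v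
    by (rule onorm[OF matrix_vector_mul_bounded_linear])+
  have "?oC \<ge> 0" "?oCt \<ge> 0"
    by (rule onorm_pos_le[OF matrix_vector_mul_bounded_linear])+
  have "norm (SJ z *v v) \<le> ?oCt * (KJ * (?oC * norm v))" if z: "z \<in> Q" for z v
  proof -
    have "onorm ((*v) (jac_F blk hess z)) \<le> KJ"
      unfolding KJ_def by (rule onorm_le_matrix_component) (simp add: jac_F_def B[OF z])
    then have J: "norm (jac_F blk hess z *v w) \<le> KJ * norm w" for w
      using onorm[OF matrix_vector_mul_bounded_linear, of "jac_F blk hess z" w]
      by (meson mult_right_mono norm_ge_zero order_trans)
    have "SJ z *v v = transpose C *v (jac_F blk hess z *v (C *v v))"
      by (simp add: scaled_jac_def matrix_vector_mul_assoc matrix_mul_assoc)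
    also have "norm \<dots> \<le> ?oCt * norm (jac_F blk hess z *v (C *v v))" by (rule oC)
    also have "\<dots> \<le> ?oCt * (KJ * norm (C *v v))" by (intro mult_left_mono J \<open>?oCt \<ge> 0\<close>)
    also have "\<dots> \<le> ?oCt * (KJ * (?oC * norm v))"
      using order_trans[OF abs_ge_zero B[OF z]] \<open>?oCt \<ge> 0\<close>
      by (intro mult_left_mono oC) (auto simp: KJ_def)
    finally show ?thesis .
  qed
  then show ?thesis using that[of "?oCt * KJ * ?oC"] by (simp add: mult.assoc)
qed

lemma bdd_below_block_lambda_least: "bdd_below ((\<lambda>z. block_lambda_least blk (SJ z) i) ` Q)"
proof -
  obtain L where L: "\<And>z v. z \<in> Q \<Longrightarrow> norm (SJ z *v v) \<le> L * norm v" using scaled_jac_bound by blast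
  obtain k0 where "blk k0 = i" using blocks_nonempty by (metis surjD)
  have "block_lambda_least blk (SJ z) i \<ge> - L" if z: "z \<in> Q" for z
  proof -
    obtain v where v: "norm v = 1" "block_lambda_least blk (SJ z) i = v \<bullet> (SJ z *v v)"
      using block_lambda_least_quadratic_form[of blk k0 i "SJ z", OF \<open>blk k0 = i\<close>] by blast
    have "\<bar>v \<bullet> (SJ z *v v)\<bar> \<le> norm v * norm (SJ z *v v)" by (rule Cauchy_Schwarz_ineq2)
    also have "\<dots> \<le> L" using L[OF z, of v] v by simp
    finally show ?thesis using v by linarith
  qed
  then show ?thesis by (intro bdd_belowI2[where m="- L"])
qed

lemma quadratic_form_ge_alpha:
  assumes z: "z \<in> Q" and u: "u \<in> blk_space blk i"
  shows "u \<bullet> (SJ z *v u) \<ge> alpha i * (norm u)^2"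
proof -
  obtain k0 where "blk k0 = i" using blocks_nonempty by (metis surjD)
  then obtain v where "\<And>u. u \<in> blk_space blk i \<Longrightarrow>
      u \<bullet> (SJ z *v u) \<ge> block_lambda_least blk (SJ z) i * (norm u)^2"
    using block_lambda_least_quadratic_form[of blk k0 i "SJ z"] by blast
  then have "u \<bullet> (SJ z *v u) \<ge> block_lambda_least blk (SJ z) i * (norm u)^2" using u by blast
  moreover have "alpha i \<le> block_lambda_least blk (SJ z) i"
    unfolding alpha_min_def by (rule cINF_lower[OF bdd_below_block_lambda_least z])
  then have "alpha i * (norm u)^2 \<le> block_lambda_least blk (SJ z) i * (norm u)^2"
    by (rule mult_right_mono) simp
  ultimately show ?thesis by linarith
qed

lemma bdd_above_block_norm2: "bdd_above ((\<lambda>z. block_norm2 blk (SJ z) i j) ` Q)"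
proof -
  obtain L where L: "\<And>z v. z \<in> Q \<Longrightarrow> norm (SJ z *v v) \<le> L * norm v" using scaled_jac_bound by blast
  have "block_norm2 blk (SJ z) i j \<le> max L 0" if z: "z \<in> Q" for z
    unfolding block_norm2_def
  proof (rule onorm_le)
    fix v
    have "norm (blk_proj blk i (SJ z *v blk_proj blk j v)) \<le> L * norm (blk_proj blk j v)"
      by (rule order_trans[OF norm_blk_proj_le L[OF z]])
    also have "\<dots> \<le> max L 0 * norm v"
      using norm_blk_proj_le[of blk j v] by (intro mult_mono) auto
    finally show "norm (blk_proj blk i (SJ z *v blk_proj blk j v)) \<le> max L 0 * norm v" .
  qed
  then show ?thesis by (intro bdd_aboveI2)
qed

lemma block_norm2_le_beta: "z \<in> Q \<Longrightarrow> block_norm2 blk (SJ z) i j \<le> beta i j"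
  unfolding beta_max_def by (rule cSUP_upper[OF _ bdd_above_block_norm2])

lemma beta_nonneg: "beta i j \<ge> 0"
proof -
  obtain z where "z \<in> Q" using Q_nonempty by blast
  have "0 \<le> block_norm2 blk (SJ z) i j"
    unfolding block_norm2_def by (rule onorm_pos_le[OF bounded_linear_block_mult])
  also have "\<dots> \<le> beta i j" by (rule block_norm2_le_beta[OF \<open>z \<in> Q\<close>])
  finally show ?thesis .
qed

lemma inner_scaled_jac_le_beta:
  assumes z: "z \<in> Q" and u: "u \<in> blk_space blk i" and v: "v \<in> blk_space blk j"
  shows "u \<bullet> (SJ z *v v) \<le> beta i j * norm u * norm v"
proof -
  have "u \<bullet> (SJ z *v v) = u \<bullet> blk_proj blk i (SJ z *v blk_proj blk j v)"
    using inner_blk_space[OF u] v blk_space_iff by metis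
  also have "\<dots> \<le> norm u * norm (blk_proj blk i (SJ z *v blk_proj blk j v))"
    by (rule norm_cauchy_schwarz)
  also have "\<dots> \<le> norm u * (beta i j * norm v)"
  proof (intro mult_left_mono norm_ge_zero)
    have "norm (blk_proj blk i (SJ z *v blk_proj blk j v)) \<le> block_norm2 blk (SJ z) i j * norm v"
      unfolding block_norm2_def by (rule onorm[OF bounded_linear_block_mult])
    also have "\<dots> \<le> beta i j * norm v" using block_norm2_le_beta[OF z] by (intro mult_right_mono) auto
    finally show "norm (blk_proj blk i (SJ z *v blk_proj blk j v)) \<le> beta i j * norm v" .
  qed
  finally show ?thesis by (simp add: mult_ac)
qed

lemma has_real_derivative_f_line:
  assumes "p0 + t *\<^sub>R h \<in> U"
  shows "((\<lambda>s. f i (p0 + s *\<^sub>R h)) has_real_derivative (grad i (p0 + t *\<^sub>R h) \<bullet> h)) (at t)"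
proof -
  have "((\<lambda>s. p0 + s *\<^sub>R h) has_derivative (\<lambda>s. s *\<^sub>R h)) (at t)"
    by (auto intro!: derivative_eq_intros)
  from has_derivative_compose[OF this f_deriv[OF assms]] show ?thesis
    unfolding has_field_derivative_def by (rule has_derivative_eq_rhs) (simp add: fun_eq_iff mult.commute)
qed

lemma has_real_derivative_grad_line:
  assumes "p0 + t *\<^sub>R h \<in> U"
  shows "((\<lambda>s. d \<bullet> grad i (p0 + s *\<^sub>R h)) has_real_derivative (d \<bullet> (hess i (p0 + t *\<^sub>R h) *v h))) (at t)"
proof -
  have "((\<lambda>s. p0 + s *\<^sub>R h) has_derivative (\<lambda>s. s *\<^sub>R h)) (at t)"
    by (auto intro!: derivative_eq_intros)
  from has_derivative_compose[OF this grad_deriv[OF assms]]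
  have "((\<lambda>s. d \<bullet> grad i (p0 + s *\<^sub>R h)) has_derivative (\<lambda>s. d \<bullet> (hess i (p0 + t *\<^sub>R h) *v (s *\<^sub>R h)))) (at t)"
    by (rule bounded_linear.has_derivative[OF bounded_linear_inner_right])
  then show ?thesis
    unfolding has_field_derivative_def
    by (rule has_derivative_eq_rhs) (simp add: fun_eq_iff mult.commute matrix_vector_mult_scaleR)
qed

lemma grad_mean_value:
  assumes "p0 \<in> Q" "p1 \<in> Q"
  obtains z where "z \<in> Q" "d \<bullet> (grad i p1 - grad i p0) = d \<bullet> (hess i z *v (p1 - p0))"
proof -
  let ?h = "p1 - p0"
  have "\<exists>t. 0 < t \<and> t < 1 \<and> d \<bullet> grad i (p0 + 1 *\<^sub>R ?h) - d \<bullet> grad i (p0 + 0 *\<^sub>R ?h)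
          = (1 - 0) * (d \<bullet> (hess i (p0 + t *\<^sub>R ?h) *v ?h))"
    using segment_in_Q[OF assms] Q_U
    by (intro MVT2 has_real_derivative_grad_line) auto
  then obtain t where "0 < t" "t < 1"
    "d \<bullet> grad i p1 - d \<bullet> grad i p0 = d \<bullet> (hess i (p0 + t *\<^sub>R ?h) *v ?h)" by auto
  with segment_in_Q[OF assms, of t] that show ?thesis by (simp add: inner_diff_right)
qed

text \<open>Rows of \<open>hess i\<close> in block \<open>i\<close> are rows of the Jacobian of \<open>F\<close>; rescaling by \<open>C\<close> turns
  them into rows of the scaled Jacobian.\<close>

lemma inner_hess_scaled_jac:
  assumes d: "d \<in> blk_space blk i"
  shows "d \<bullet> (hess i z *v w) = (Cinv *v d) \<bullet> (SJ z *v (Cinv *v w))"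
proof -
  let ?J = "jac_F blk hess z"
  have "blk_proj blk i (hess i z *v w) = blk_proj blk i (?J *v w)"
    by (simp add: vec_eq_iff blk_proj_def matrix_vector_mult_def jac_F_def)
  then have "d \<bullet> (hess i z *v w) = (C *v (Cinv *v d)) \<bullet> (?J *v (C *v (Cinv *v w)))"
    using inner_blk_space[OF d] by (metis C_Cinv(1))
  also have "\<dots> = (Cinv *v d) \<bullet> (transpose C *v (?J *v (C *v (Cinv *v w))))"
    by (rule inner_matrix_vector_mult_transpose)
  also have "\<dots> = (Cinv *v d) \<bullet> (SJ z *v (Cinv *v w))"
    by (simp add: scaled_jac_def matrix_vector_mul_assoc matrix_mul_assoc)
  finally show ?thesis .
qed

lemma inner_hess_blocks:
  assumes "d \<in> blk_space blk i"
  shows "d \<bullet> (hess i z *v w) = (\<Sum>j\<in>UNIV. (Cinv *v d) \<bullet> (SJ z *v (Cinv *v blk_proj blk j w)))"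
proof -
  have "d \<bullet> (hess i z *v w) = (Cinv *v d) \<bullet> (SJ z *v (Cinv *v (\<Sum>j\<in>UNIV. blk_proj blk j w)))"
    using inner_hess_scaled_jac[OF assms] by (simp add: sum_blk_proj)
  also have "Cinv *v (\<Sum>j\<in>UNIV. blk_proj blk j w) = (\<Sum>j\<in>UNIV. Cinv *v blk_proj blk j w)"
    by (rule linear_sum[OF matrix_vector_mul_linear])
  also have "SJ z *v \<dots> = (\<Sum>j\<in>UNIV. SJ z *v (Cinv *v blk_proj blk j w))"
    by (rule linear_sum[OF matrix_vector_mul_linear])
  finally show ?thesis by (simp add: inner_sum_right)
qed

lemma grad_monotone_alpha:
  assumes x: "x \<in> Q" and a: "a \<in> Qs i" and b: "b \<in> Qs i"
  shows "(a - b) \<bullet> (grad i (blk_upd blk x i a) - grad i (blk_upd blk x i b))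
           \<ge> alpha i * (norm (Cinv *v (a - b)))^2"
proof -
  have d: "a - b \<in> blk_space blk i"
    using Qs_blk_space[OF a] Qs_blk_space[OF b] subspace_blk_space by (metis subspace_diff)
  obtain z where z: "z \<in> Q" and e: "(a - b) \<bullet> (grad i (blk_upd blk x i a) - grad i (blk_upd blk x i b))
      = (a - b) \<bullet> (hess i z *v (blk_upd blk x i a - blk_upd blk x i b))"
    using grad_mean_value[OF blk_upd_in_Q[OF x b] blk_upd_in_Q[OF x a]] by blast
  have "blk_upd blk x i a - blk_upd blk x i b = a - b"
    using blk_upd_blk_space[OF Qs_blk_space[OF a]] blk_upd_blk_space[OF Qs_blk_space[OF b]] by simp
  with e have "(a - b) \<bullet> (grad i (blk_upd blk x i a) - grad i (blk_upd blk x i b))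
      = (Cinv *v (a - b)) \<bullet> (SJ z *v (Cinv *v (a - b)))"
    using inner_hess_scaled_jac[OF d] by simp
  also have "\<dots> \<ge> alpha i * (norm (Cinv *v (a - b)))^2"
    by (rule quadratic_form_ge_alpha[OF z Cinv_blk_space[OF d]])
  finally show ?thesis .
qed

lemma grad_strongly_monotone:
  assumes "alpha i > 0"
  obtains \<mu> where "\<mu> > 0" "\<And>x a b. x \<in> Q \<Longrightarrow> a \<in> Qs i \<Longrightarrow> b \<in> Qs i \<Longrightarrow>
     (a - b) \<bullet> (grad i (blk_upd blk x i a) - grad i (blk_upd blk x i b)) \<ge> \<mu> * (norm (a - b))^2"
proof -
  obtain K where K: "K > 0" "\<And>d. norm d \<le> K * norm (Cinv *v d)" using norm_le_Cinv by blast
  have scaled: "alpha i / K^2 * (norm d)^2 \<le> alpha i * (norm (Cinv *v d))^2" for d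
  proof -
    have "(norm d)^2 \<le> K^2 * (norm (Cinv *v d))^2"
      using power_mono[OF K(2)[of d], of 2] by (simp add: power_mult_distrib)
    then show ?thesis using assms K(1) by (simp add: field_simps)
  qed
  show ?thesis
  proof (rule that)
    show "alpha i / K^2 > 0" using assms K(1) by simp
    fix x a b assume "x \<in> Q" "a \<in> Qs i" "b \<in> Qs i"
    from grad_monotone_alpha[OF this] scaled[of "a - b"]
    show "(a - b) \<bullet> (grad i (blk_upd blk x i a) - grad i (blk_upd blk x i b))
        \<ge> alpha i / K^2 * (norm (a - b))^2" by linarith
  qed
qed

lemma best_resp_variational_inequality:
  assumes x: "x \<in> Q" and y: "is_best_resp blk f Qs x i y" and z: "z \<in> Qs i"
  shows "grad i (blk_upd blk x i y) \<bullet> (z - y) \<ge> 0"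
proof (rule ccontr)
  assume neg: "\<not> ?thesis"
  have yQ: "y \<in> Qs i" and ymin: "\<And>w. w \<in> Qs i \<Longrightarrow> f i (blk_upd blk x i y) \<le> f i (blk_upd blk x i w)"
    using y by (auto simp: is_best_resp_def)
  let ?p = "blk_upd blk x i y" and ?h = "z - y"
  have "?p + 0 *\<^sub>R ?h \<in> U" using blk_upd_in_Q[OF x yQ] Q_U by auto
  note deriv = has_real_derivative_f_line[OF this, of i]
  have "grad i (?p + 0 *\<^sub>R ?h) \<bullet> ?h < 0" using neg by simp
  from DERIV_neg_dec_right[OF deriv this] obtain d where d: "d > 0"
    "\<And>t. 0 < t \<Longrightarrow> t < d \<Longrightarrow> f i (?p + 0 *\<^sub>R ?h) > f i (?p + (0 + t) *\<^sub>R ?h)"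
    by blast
  define t where "t = min (d / 2) 1"
  have t: "0 < t" "t < d" "t \<le> 1" using d by (auto simp: t_def)
  have yt: "y + t *\<^sub>R ?h \<in> Qs i" using segment_in_Qs[OF yQ z] t by simp
  have "?p + t *\<^sub>R ?h = blk_upd blk x i (y + t *\<^sub>R ?h)"
    using blk_upd_blk_space[OF Qs_blk_space[OF yQ]] blk_upd_blk_space[OF Qs_blk_space[OF yt]] by simp
  with ymin[OF yt] have "f i ?p \<le> f i (?p + t *\<^sub>R ?h)" by simp
  moreover have "f i (?p + t *\<^sub>R ?h) < f i ?p" using d(2)[OF t(1,2)] by simp
  ultimately show False by simp
qed

lemma quadratic_growth:
  assumes x: "x \<in> Q" and y0: "y0 \<in> Qs i" and y: "y \<in> Qs i"
    and mono: "\<And>a b. a \<in> Qs i \<Longrightarrow> b \<in> Qs i \<Longrightarrow>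
       (a - b) \<bullet> (grad i (blk_upd blk x i a) - grad i (blk_upd blk x i b)) \<ge> \<mu> * (norm (a - b))^2"
  shows "f i (blk_upd blk x i y) \<ge> f i (blk_upd blk x i y0) + grad i (blk_upd blk x i y0) \<bullet> (y - y0)
            + \<mu> / 2 * (norm (y - y0))^2"
proof -
  let ?h = "y - y0" and ?p0 = "blk_upd blk x i y0"
  let ?G = "grad i ?p0"
  define n2 where "n2 = (norm ?h)^2"
  define \<psi> where "\<psi> s = f i (?p0 + s *\<^sub>R ?h) - s * (?G \<bullet> ?h) - \<mu> / 2 * s^2 * n2" for s
  define \<psi>' where "\<psi>' s = grad i (?p0 + s *\<^sub>R ?h) \<bullet> ?h - ?G \<bullet> ?h - \<mu> * s * n2" for s
  have seg: "?p0 + s *\<^sub>R ?h = blk_upd blk x i (y0 + s *\<^sub>R ?h)" "y0 + s *\<^sub>R ?h \<in> Qs i"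
    if "0 \<le> s" "s \<le> 1" for s
    using segment_in_Qs[OF y0 y that] blk_upd_blk_space[OF Qs_blk_space[OF y0]]
      blk_upd_blk_space[OF Qs_blk_space[OF segment_in_Qs[OF y0 y that]]]
    by simp_all
  have "\<exists>t. 0 < t \<and> t < 1 \<and> \<psi> 1 - \<psi> 0 = (1 - 0) * \<psi>' t"
  proof (rule MVT2)
    fix s :: real assume s: "0 \<le> s" "s \<le> 1"
    have "blk_upd blk x i (y0 + s *\<^sub>R ?h) \<in> Q" by (rule blk_upd_in_Q[OF x seg(2)[OF s]])
    then have "?p0 + s *\<^sub>R ?h \<in> U" using seg(1)[OF s] Q_U by auto
    then have d1: "((\<lambda>s. f i (?p0 + s *\<^sub>R ?h)) has_real_derivative (grad i (?p0 + s *\<^sub>R ?h) \<bullet> ?h)) (at s)"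
      by (rule has_real_derivative_f_line)
    have d2: "((\<lambda>s. s * (?G \<bullet> ?h)) has_real_derivative (?G \<bullet> ?h)) (at s)"
      by (auto intro!: derivative_eq_intros)
    have d3: "((\<lambda>s. \<mu> / 2 * s^2 * n2) has_real_derivative (\<mu> * s * n2)) (at s)"
      by (auto intro!: derivative_eq_intros)
    show "(\<psi> has_real_derivative \<psi>' s) (at s)"
      unfolding \<psi>_def[abs_def] \<psi>'_def by (rule DERIV_diff[OF DERIV_diff[OF d1 d2] d3])
  qed simp
  then obtain t where t: "0 < t" "t < 1" "\<psi> 1 - \<psi> 0 = \<psi>' t" by auto
  have e1: "(y0 + t *\<^sub>R ?h) - y0 = t *\<^sub>R ?h" by simp
  have e2: "blk_upd blk x i (y0 + t *\<^sub>R ?h) = ?p0 + t *\<^sub>R ?h" using seg(1) t by simp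
  have "(t *\<^sub>R ?h) \<bullet> (grad i (?p0 + t *\<^sub>R ?h) - ?G) \<ge> \<mu> * (norm (t *\<^sub>R ?h))^2"
    using mono[OF seg(2) y0, of t] t by (simp only: e1 e2)
  moreover have "(norm (t *\<^sub>R ?h))^2 = t * (t * n2)"
    using t by (simp add: n2_def power_mult_distrib power2_eq_square)
  ultimately have "t * (?h \<bullet> (grad i (?p0 + t *\<^sub>R ?h) - ?G)) \<ge> t * (t * (\<mu> * n2))"
    by (simp add: algebra_simps)
  then have "?h \<bullet> (grad i (?p0 + t *\<^sub>R ?h) - ?G) \<ge> t * (\<mu> * n2)" using t by simp
  then have "\<psi>' t \<ge> 0"
    by (simp add: \<psi>'_def inner_diff_right inner_commute algebra_simps)
  with t seg(1)[of 1] show ?thesis by (simp add: \<psi>_def n2_def inner_commute)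
qed

lemma continuous_on_blk_upd_f:
  assumes "x \<in> Q"
  shows "continuous_on (Qs i) (\<lambda>y. f i (blk_upd blk x i y))"
proof (intro continuous_at_imp_continuous_on ballI)
  fix y assume y: "y \<in> Qs i"
  have "blk_upd blk x i = (\<lambda>y. x - blk_proj blk i x + blk_proj blk i y)"
    by (simp add: fun_eq_iff blk_upd_eq)
  then have "isCont (blk_upd blk x i) y"
    by (simp add: linear_continuous_at[OF bounded_linear_blk_proj])
  moreover have "blk_upd blk x i y \<in> U" using blk_upd_in_Q[OF assms y] Q_U by blast
  then have "isCont (f i) (blk_upd blk x i y)" by (rule has_derivative_continuous[OF f_deriv])
  ultimately show "isCont (\<lambda>y. f i (blk_upd blk x i y)) y" by (rule isCont_o2)
qed

text \<open>By quadratic growth, minimisers lie in a ball around any feasible point; there a minimiser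
  exists by compactness.\<close>

lemma best_resp_exists:
  assumes x: "x \<in> Q" and alpha: "alpha i > 0"
  shows "\<exists>y. is_best_resp blk f Qs x i y"
proof -
  obtain \<mu> where \<mu>: "\<mu> > 0" and mono: "\<And>x a b. x \<in> Q \<Longrightarrow> a \<in> Qs i \<Longrightarrow> b \<in> Qs i \<Longrightarrow>
       (a - b) \<bullet> (grad i (blk_upd blk x i a) - grad i (blk_upd blk x i b)) \<ge> \<mu> * (norm (a - b))^2"
    using grad_strongly_monotone[OF alpha] by blast
  obtain y0 where y0: "y0 \<in> Qs i" using Q_ne by blast
  let ?g = "\<lambda>y. f i (blk_upd blk x i y)"
  let ?G = "grad i (blk_upd blk x i y0)"
  define R where "R = 2 * norm ?G / \<mu>"
  let ?K = "Qs i \<inter> cball y0 R"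
  have "y0 \<in> ?K" using y0 \<mu> by (simp add: R_def)
  moreover have "compact ?K" by (intro closed_Int_compact Q_closed compact_cball)
  moreover have "continuous_on ?K ?g"
    by (rule continuous_on_subset[OF continuous_on_blk_upd_f[OF x] Int_lower1])
  ultimately obtain ys where ys: "ys \<in> ?K" and ys_min: "\<And>w. w \<in> ?K \<Longrightarrow> ?g ys \<le> ?g w"
    using continuous_attains_inf[of ?K ?g] by blast
  have "?g ys \<le> ?g w" if w: "w \<in> Qs i" for w
  proof (cases "w \<in> cball y0 R")
    case False
    define r where "r = norm (w - y0)"
    then have "\<mu> * r \<ge> 2 * norm ?G"
      using False \<mu> by (simp add: R_def dist_norm norm_minus_commute field_simps)
    then have "\<mu> / 2 * r^2 \<ge> norm ?G * r"
      using mult_right_mono[of "2 * norm ?G" "\<mu> * r" r] by (simp add: r_def power2_eq_square)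
    moreover have "?G \<bullet> (w - y0) \<ge> - (norm ?G * r)"
      using Cauchy_Schwarz_ineq2[of ?G "w - y0"] by (simp add: r_def)
    moreover have "?g w \<ge> ?g y0 + ?G \<bullet> (w - y0) + \<mu> / 2 * r^2"
      using quadratic_growth[OF x y0 w mono[OF x]] by (simp add: r_def)
    moreover have "?g ys \<le> ?g y0" using ys_min \<open>y0 \<in> ?K\<close> by blast
    ultimately show ?thesis by linarith
  qed (use w ys_min in blast)
  then show ?thesis using ys unfolding is_best_resp_def by blast
qed

lemma best_resp_unique:
  assumes x: "x \<in> Q" and alpha: "alpha i > 0"
    and y1: "is_best_resp blk f Qs x i y1" and y2: "is_best_resp blk f Qs x i y2"
  shows "y1 = y2"
proof -
  obtain \<mu> where \<mu>: "\<mu> > 0" and mono: "\<And>x a b. x \<in> Q \<Longrightarrow> a \<in> Qs i \<Longrightarrow> b \<in> Qs i \<Longrightarrow>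
       (a - b) \<bullet> (grad i (blk_upd blk x i a) - grad i (blk_upd blk x i b)) \<ge> \<mu> * (norm (a - b))^2"
    using grad_strongly_monotone[OF alpha] by blast
  have q: "y1 \<in> Qs i" "y2 \<in> Qs i" using y1 y2 by (auto simp: is_best_resp_def)
  have "(y1 - y2) \<bullet> (grad i (blk_upd blk x i y1) - grad i (blk_upd blk x i y2)) \<le> 0"
    using best_resp_variational_inequality[OF x y1 q(2)] best_resp_variational_inequality[OF x y2 q(1)]
    by (simp add: inner_diff_left inner_diff_right inner_commute)
  with mono[OF x q] have "\<mu> * (norm (y1 - y2))^2 \<le> 0" by linarith
  with \<mu> have "(norm (y1 - y2))^2 \<le> 0" by (simp add: mult_le_0_iff)
  then show ?thesis by simp
qed

lemma best_resp_block_lipschitz: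
  assumes x: "x \<in> Q" and y: "y \<in> Q"
    and a: "is_best_resp blk f Qs x i a" and b: "is_best_resp blk f Qs y i b"
  shows "alpha i * norm (Cinv *v (a - b)) \<le> (\<Sum>j\<in>UNIV-{i}. beta i j * norm (Cinv *v blk_proj blk j (x - y)))"
proof -
  have qa: "a \<in> Qs i" and qb: "b \<in> Qs i" using a b by (auto simp: is_best_resp_def)
  let ?pa = "blk_upd blk x i a" and ?pb = "blk_upd blk y i b"
  define u where "u = Cinv *v (a - b)"
  define v where "v j = Cinv *v blk_proj blk j (y - x)" for j
  define R where "R = (\<Sum>j\<in>UNIV-{i}. beta i j * norm (Cinv *v blk_proj blk j (x - y)))"
  have sa: "a \<in> blk_space blk i" and sb: "b \<in> blk_space blk i" using qa qb Qs_blk_space by auto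
  have d: "a - b \<in> blk_space blk i" using sa sb subspace_blk_space by (metis subspace_diff)
  have u: "u \<in> blk_space blk i" unfolding u_def by (rule Cinv_blk_space[OF d])
  have norm_v: "norm (v j) = norm (Cinv *v blk_proj blk j (x - y))" for j
  proof -
    have "v j = - (Cinv *v blk_proj blk j (x - y))"
      by (simp add: v_def blk_proj_diff matrix_vector_mult_diff_distrib)
    then show ?thesis by simp
  qed
  have vi: "(a - b) \<bullet> (grad i ?pb - grad i ?pa) \<ge> 0"
    using best_resp_variational_inequality[OF x a qb] best_resp_variational_inequality[OF y b qa]
    by (simp add: inner_diff_left inner_diff_right inner_commute)
  obtain z where z: "z \<in> Q"
    and mvt: "(a - b) \<bullet> (grad i ?pb - grad i ?pa) = (a - b) \<bullet> (hess i z *v (?pb - ?pa))"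
    using grad_mean_value[OF blk_upd_in_Q[OF x qa] blk_upd_in_Q[OF y qb]] by blast
  have "blk_proj blk j (?pb - ?pa) = (if j = i then b - a else blk_proj blk j (y - x))" for j
    using sa sb blk_proj_other_blk_space[OF sa, of j] blk_proj_other_blk_space[OF sb, of j]
    by (simp add: blk_upd_blk_space blk_proj_diff blk_proj_add blk_proj_blk_proj blk_space_iff)
  moreover have "Cinv *v (b - a) = - u" by (simp add: u_def matrix_vector_mult_diff_distrib)
  ultimately have "(a - b) \<bullet> (hess i z *v (?pb - ?pa))
      = - (u \<bullet> (SJ z *v u)) + (\<Sum>j\<in>UNIV-{i}. u \<bullet> (SJ z *v v j))"
    unfolding inner_hess_blocks[OF d] sum.remove[OF finite UNIV_I, of _ i]
    by (simp add: u_def[symmetric] v_def vec.neg)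
  with vi mvt have "u \<bullet> (SJ z *v u) \<le> (\<Sum>j\<in>UNIV-{i}. u \<bullet> (SJ z *v v j))" by simp
  also have "\<dots> \<le> (\<Sum>j\<in>UNIV-{i}. beta i j * norm u * norm (v j))"
    unfolding v_def
    by (intro sum_mono inner_scaled_jac_le_beta[OF z u] Cinv_blk_space blk_proj_in_blk_space)
  also have "\<dots> = norm u * R" by (simp add: R_def norm_v sum_distrib_left mult_ac)
  finally have "alpha i * (norm u)^2 \<le> norm u * R"
    using quadratic_form_ge_alpha[OF z u] by linarith
  moreover have "R \<ge> 0" unfolding R_def by (intro sum_nonneg mult_nonneg_nonneg beta_nonneg norm_ge_zero)
  ultimately show ?thesis
    unfolding R_def[symmetric] u_def[symmetric]
    by (cases "norm u = 0") (auto simp: power2_eq_square mult.assoc)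
qed

lemma ex1_best_resp: "x \<in> Q \<Longrightarrow> alpha i > 0 \<Longrightarrow> \<exists>!y. is_best_resp blk f Qs x i y"
  using best_resp_exists best_resp_unique by (rule ex_ex1I)

lemma is_best_resp_best_resp:
  assumes alpha: "\<And>i. alpha i > 0" and x: "x \<in> Q"
  shows "is_best_resp blk f Qs x i (blk_proj blk i (best_resp blk f Qs x))"
proof -
  have "\<exists>!y. is_best_resp blk f Qs x j y" for j by (rule ex1_best_resp[OF x alpha])
  then have br: "is_best_resp blk f Qs x j (THE y. is_best_resp blk f Qs x j y)" for j
    by (rule theI')
  then have "(THE y. is_best_resp blk f Qs x j y) \<in> blk_space blk j" for j
    using Qs_blk_space unfolding is_best_resp_def by blast
  then have "blk_proj blk i (best_resp blk f Qs x) = (THE y. is_best_resp blk f Qs x i y)"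
    unfolding best_resp_def by (rule blk_proj_sum_blk_space)
  with br show ?thesis by simp
qed

lemma P_matrix_Upsilon_F_dominant:
  assumes "P_matrix (Upsilon_F blk C hess Q)"
  obtains c where "\<And>i. c i > 0" "\<And>i. (\<Sum>j\<in>UNIV-{i}. beta i j * c j) < alpha i * c i"
proof -
  have "Upsilon_F blk C hess Q $ i $ j \<le> 0" if "i \<noteq> j" for i j
    using that beta_nonneg by (simp add: Upsilon_F_def)
  then obtain c where c: "\<And>i. c i > 0"
    and row: "\<And>i. (\<Sum>j\<in>UNIV. Upsilon_F blk C hess Q $ i $ j * c j) > 0"
    using P_matrix_Z_matrix_positive_vector[OF _ assms] by metis
  moreover have "(\<Sum>j\<in>UNIV-{i}. beta i j * c j) < alpha i * c i" for i
    using row[of i] unfolding Upsilon_F_def row_sum_diag_minus_offdiag by simp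
  ultimately show ?thesis using that by blast
qed

lemma best_resp_in_Q: "(\<And>i. alpha i > 0) \<Longrightarrow> x \<in> Q \<Longrightarrow> best_resp blk f Qs x \<in> Q"
  using is_best_resp_best_resp unfolding mem_Q_iff is_best_resp_def by blast

lemma best_resp_block_contraction:
  assumes alpha: "\<And>i. alpha i > 0" and "x \<in> Q" "y \<in> Q"
  shows "alpha i * norm (Cinv *v blk_proj blk i (best_resp blk f Qs x - best_resp blk f Qs y))
           \<le> (\<Sum>j\<in>UNIV-{i}. beta i j * norm (Cinv *v blk_proj blk j (x - y)))"
  using best_resp_block_lipschitz[OF assms(2,3) is_best_resp_best_resp[OF alpha assms(2)]
      is_best_resp_best_resp[OF alpha assms(3)]]
  by (simp add: blk_proj_diff)

end

theorem mainTheorem4: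
  fixes blk :: "'k::finite \<Rightarrow> 'p::finite"
    and Qs :: "'p \<Rightarrow> (real^'k) set"
    and f :: "'p \<Rightarrow> real^'k \<Rightarrow> real"
    and grad :: "'p \<Rightarrow> real^'k \<Rightarrow> real^'k"
    and hess :: "'p \<Rightarrow> real^'k \<Rightarrow> real^'k^'k"
    and U :: "(real^'k) set"
    and C :: "real^'k^'k"
  assumes blocks_nonempty: "surj blk"
    and Q_sub: "\<And>i. Qs i \<subseteq> blk_space blk i"
    and Q_ne: "\<And>i. Qs i \<noteq> {}"
    and Q_closed: "\<And>i. closed (Qs i)"
    and Q_convex: "\<And>i. convex (Qs i)"
    and U_open: "open U"
    and Q_U: "prod_set blk Qs \<subseteq> U"
    and f_deriv: "\<And>i x. x \<in> U \<Longrightarrow> (f i has_derivative (\<lambda>h. grad i x \<bullet> h)) (at x)"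
    and grad_deriv: "\<And>i x. x \<in> U \<Longrightarrow> (grad i has_derivative (\<lambda>h. hess i x *v h)) (at x)"
    and hess_cont: "\<And>i. continuous_on U (hess i)"
    and hess_bdd: "\<And>i. bounded (hess i ` prod_set blk Qs)"
    and f_convex: "\<And>i x. x \<in> prod_set blk Qs \<Longrightarrow> convex_on (Qs i) (\<lambda>y. f i (blk_upd blk x i y))"
    and C_blockdiag: "block_diag blk C"
    and C_invertible: "invertible C"
    and P: "P_matrix (Upsilon_F blk C hess (prod_set blk Qs))"
  shows "(\<forall>x\<in>prod_set blk Qs. \<forall>i. \<exists>!y. is_best_resp blk f Qs x i y)
    \<and> (\<forall>x\<in>prod_set blk Qs. best_resp blk f Qs x \<in> prod_set blk Qs)
    \<and> (\<exists>c. (\<forall>i. c i > 0)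
         \<and> weighted_inf_mat_norm c (Gamma_F blk C hess (prod_set blk Qs)) < 1
         \<and> (\<forall>x\<in>prod_set blk Qs. \<forall>y\<in>prod_set blk Qs.
              block_vnorm blk C c (best_resp blk f Qs x - best_resp blk f Qs y)
                \<le> weighted_inf_mat_norm c (Gamma_F blk C hess (prod_set blk Qs))
                   * block_vnorm blk C c (x - y)))"
proof -
  interpret nep blk Qs f grad hess U C
    by (unfold_locales; fact assms)
  have alpha: "alpha i > 0" for i
    using P_matrix_diag_pos[OF P, of i] by (simp add: Upsilon_F_def)
  obtain c where c: "\<And>i. c i > 0"
    and dominant: "\<And>i. (\<Sum>j\<in>UNIV-{i}. beta i j * c j) < alpha i * c i"
    using P_matrix_Upsilon_F_dominant[OF P] by blast
  show ?thesis
  proof (intro conjI ballI allI exI[of _ c])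
    show "\<exists>!y. is_best_resp blk f Qs x i y" if "x \<in> Q" for x i by (rule ex1_best_resp[OF that alpha])
    show "best_resp blk f Qs x \<in> Q" if "x \<in> Q" for x by (rule best_resp_in_Q[OF alpha that])
    show "c i > 0" for i by (rule c)
    show "weighted_inf_mat_norm c (Gamma_F blk C hess Q) < 1"
      unfolding Gamma_F_def by (rule weighted_inf_mat_norm_ratio_lt_1[OF alpha beta_nonneg c dominant])
    show "block_vnorm blk C c (best_resp blk f Qs x - best_resp blk f Qs y)
        \<le> weighted_inf_mat_norm c (Gamma_F blk C hess Q) * block_vnorm blk C c (x - y)"
      if "x \<in> Q" "y \<in> Q" for x y
      unfolding Gamma_F_def
      by (rule block_vnorm_le_weighted_inf_mat_norm[OF alpha beta_nonneg c
            best_resp_block_contraction[OF alpha that]])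
  qed
qed

end
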